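(* Let $p$ be an odd prime, let $\epsilon>0$, and put $$\Delta=\frac{\epsilon^6}{2^{13}p^2}\exp\!\left(-16\,\epsilon^{-1}c_p\log p\right),$$ where $c_p$ is the constant described in the context. Suppose $f:\mathbb{F}_{p^n}\to[0,1]$ has the property that for every subspace $W$ of $\mathbb{F}_{p^n}$ of codimension at most $\Delta^{-2}$, $$\mathbb{E}(|f(m)-f_W(m)|)>\epsilon.$$ Then there exists a function $g:\mathbb{F}_{p^n}\to[0,1]$ such that $\mathbb{E}(g)=\mathbb{E}(f)$ and $\Lambda_3(g)<\Lambda_3(f)-\Delta$.
   Context: $\mathbb{F}_{p^n}$ is regarded as an $n$-dimensional vector space over $\mathbb{F}_p$; "subspace" means $\mathbb{F}_p$-subspace. For $g:\mathbb{F}_{p^n}\to\mathbb{C}$, $\mathbb{E}(g)=p^{-n}\sum_{m} g(m)$. For $f:\mathbb{F}_{p^n}\to[0,1]$, $\Lambda_3(f)=p^{-2n}\sum_{m,d} f(m)f(m+d)f(m+2d)$, and for a subspace $W$, $f_W(m)=|W|^{-1}\sum_{w\in W} f(m+w)$. The constant $c_p>0$ depends only on $p$ and is one for which Meshulam's theorem holds: for every $n$, every $S\subseteq\mathbb{F}_{p^n}$ with $|S|\ge c_p p^n/n$ contains a non-trivial three-term arithmetic progression $a,a+d,a+2d$ with $d\neq0$. *)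

theory Defs
  imports Complex_Main "HOL-Computational_Algebra.Primes"
begin

text \<open>Model of F_(p^n) as an n-dimensional F_p vector space: coordinate vectors
  v :: nat => int with v i in {0..<p} for i < n and v i = 0 for i >= n,
  with coordinatewise addition and scalar multiplication modulo p.\<close>

definition vecs :: "nat \<Rightarrow> nat \<Rightarrow> (nat \<Rightarrow> int) set" where
  "vecs p n = {v. (\<forall>i<n. 0 \<le> v i \<and> v i < int p) \<and> (\<forall>i\<ge>n. v i = 0)}"

definition vzero :: "nat \<Rightarrow> int" where
  "vzero = (\<lambda>_. 0)"

definition vadd :: "nat \<Rightarrow> (nat \<Rightarrow> int) \<Rightarrow> (nat \<Rightarrow> int) \<Rightarrow> (nat \<Rightarrow> int)" where
  "vadd p u v = (\<lambda>i. (u i + v i) mod int p)"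

definition vscale :: "nat \<Rightarrow> int \<Rightarrow> (nat \<Rightarrow> int) \<Rightarrow> (nat \<Rightarrow> int)" where
  "vscale p c v = (\<lambda>i. (c * v i) mod int p)"

definition is_subspace :: "nat \<Rightarrow> nat \<Rightarrow> (nat \<Rightarrow> int) set \<Rightarrow> bool" where
  "is_subspace p n W \<longleftrightarrow> W \<subseteq> vecs p n \<and> vzero \<in> W \<and>
     (\<forall>u\<in>W. \<forall>v\<in>W. vadd p u v \<in> W) \<and>
     (\<forall>c\<in>{0..<int p}. \<forall>v\<in>W. vscale p c v \<in> W)"

definition codim :: "nat \<Rightarrow> nat \<Rightarrow> (nat \<Rightarrow> int) set \<Rightarrow> nat" where
  "codim p n W = n - (THE d. card W = p ^ d)"

definition expect :: "nat \<Rightarrow> nat \<Rightarrow> ((nat \<Rightarrow> int) \<Rightarrow> real) \<Rightarrow> real" where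
  "expect p n g = (\<Sum>m\<in>vecs p n. g m) / real p ^ n"

definition Lambda3 :: "nat \<Rightarrow> nat \<Rightarrow> ((nat \<Rightarrow> int) \<Rightarrow> real) \<Rightarrow> real" where
  "Lambda3 p n f = (\<Sum>m\<in>vecs p n. \<Sum>d\<in>vecs p n.
      f m * f (vadd p m d) * f (vadd p m (vadd p d d))) / real p ^ (2 * n)"

definition favg :: "nat \<Rightarrow> (nat \<Rightarrow> int) set \<Rightarrow> ((nat \<Rightarrow> int) \<Rightarrow> real) \<Rightarrow> (nat \<Rightarrow> int) \<Rightarrow> real" where
  "favg p W f m = (\<Sum>w\<in>W. f (vadd p m w)) / real (card W)"

text \<open>Meshulam's theorem holds with constant c (for every n >= 1).\<close>
definition meshulam_const :: "nat \<Rightarrow> real \<Rightarrow> bool" where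
  "meshulam_const p c \<longleftrightarrow> (\<forall>n\<ge>1. \<forall>S\<subseteq>vecs p n.
     real (card S) \<ge> c * real p ^ n / real n \<longrightarrow>
     (\<exists>a\<in>S. \<exists>d\<in>vecs p n. d \<noteq> vzero \<and> vadd p a d \<in> S \<and> vadd p a (vadd p d d) \<in> S))"

end

theory Submission
  imports Defs "HOL-Library.FuncSet" "HOL-Library.Indicator_Function"
begin

text \<open>
  Let W be the annihilator of the large spectrum of f (the characters where the Fourier
  coefficient of f is at least \<Delta>). By Parseval W has codimension at most \<Delta>^(-2), and
  since averaging over W only removes small Fourier coefficients, u = f_W satisfies
  Lambda3(u) \<le> Lambda3(f) + \<Delta>. By hypothesis f is eps-far from u, which forces
  min(u, 1 - u) \<ge> eps/4 on a set S of density more than eps/2.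

  Now perturb u along a direction w0 of W: put g(x) = u(x) + min(u(x), 1 - u(x)) P(x_i0), where
  i0 is a coordinate with w0_i0 \<noteq> 0 and P is a mean zero function on the integers modulo p
  with negative progression count (minus the balanced function of a point or of a short
  interval). Then g takes values in [0, 1] and has the mean of u, hence of f. As u is
  constant along W while P(x_i0) is equidistributed along W, all mixed terms in Lambda3(g)
  vanish, and Lambda3(g) = Lambda3(u) + Lambda3_Zp(P) Lambda3(min(u, 1 - u)). Finally
  Meshulam's theorem, averaged over affine maps from a space of dimension k \<approx> 4 c/eps
  (Varnavides' argument), bounds Lambda3 of the indicator of S from below by p^(-k) eps/4;
  this makes the decrement larger than 2 \<Delta>.
\<close>

lemma sum_swap_pairs:
  "(\<Sum>a\<in>A. \<Sum>b\<in>B. \<Sum>c\<in>C. \<Sum>d\<in>D. f a b c d)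
     = (\<Sum>c\<in>C. \<Sum>d\<in>D. \<Sum>a\<in>A. \<Sum>b\<in>B. (f a b c d :: 'a :: comm_monoid_add))"
proof -
  have "(\<Sum>a\<in>A. \<Sum>b\<in>B. \<Sum>c\<in>C. \<Sum>d\<in>D. f a b c d) = (\<Sum>a\<in>A. \<Sum>c\<in>C. \<Sum>d\<in>D. \<Sum>b\<in>B. f a b c d)"
    by (intro sum.cong refl) (subst sum.swap, rule sum.cong[OF refl], rule sum.swap)
  also have "\<dots> = (\<Sum>c\<in>C. \<Sum>d\<in>D. \<Sum>a\<in>A. \<Sum>b\<in>B. f a b c d)"
    by (subst sum.swap) (rule sum.cong[OF refl], rule sum.swap)
  finally show ?thesis .
qed

lemma sum_reverse3:
  "(\<Sum>a\<in>A. \<Sum>b\<in>B. \<Sum>c\<in>C. f a b c) = (\<Sum>c\<in>C. \<Sum>b\<in>B. \<Sum>a\<in>A. (f a b c :: 'a :: comm_monoid_add))"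
proof -
  have "(\<Sum>a\<in>A. \<Sum>b\<in>B. \<Sum>c\<in>C. f a b c) = (\<Sum>a\<in>A. \<Sum>c\<in>C. \<Sum>b\<in>B. f a b c)"
    by (rule sum.cong[OF refl], rule sum.swap)
  also have "\<dots> = (\<Sum>c\<in>C. \<Sum>b\<in>B. \<Sum>a\<in>A. f a b c)"
    by (subst sum.swap) (rule sum.cong[OF refl], rule sum.swap)
  finally show ?thesis .
qed

lemma sum_indicator_subset:
  assumes "finite A" "S \<subseteq> A"
  shows "(\<Sum>x\<in>A. indicator S x :: real) = real (card S)"
  using assms sum_indicator_mult[where f = "\<lambda>_. 1 :: real" and A = A and B = S]
  by (simp add: Int_absorb1 Int_absorb2)

section \<open>Vectors over the integers modulo p\<close>

locale prime_field =
  fixes p :: nat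
  assumes prime_p: "prime p"
begin

lemma p_gt1: "p > 1"
  using prime_p prime_gt_1_nat by blast

lemma p_pos: "int p > 0"
  using p_gt1 by simp

lemma prime_int_p: "prime (int p)"
  using prime_p by simp

lemma minus_one_mod_p: "- 1 mod int p \<noteq> 0"
  using p_gt1 by (simp add: zmod_minus1)

lemma vecs_mod: "x \<in> vecs p n \<Longrightarrow> x i mod int p = x i"
  unfolding vecs_def by (cases "i < n") auto

lemma vecs_out: "x \<in> vecs p n \<Longrightarrow> n \<le> i \<Longrightarrow> x i = 0"
  unfolding vecs_def by auto

lemma vecs_eqI:
  assumes x: "x \<in> vecs p n" and y: "y \<in> vecs p n"
    and eq: "\<And>i. i < n \<Longrightarrow> x i mod int p = y i mod int p"
  shows "x = y"
proof
  fix i show "x i = y i"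
  proof (cases "i < n")
    case True
    then show ?thesis using eq[OF True] vecs_mod[OF x] vecs_mod[OF y] by simp
  next
    case False
    then show ?thesis using vecs_out[OF x] vecs_out[OF y] by simp
  qed
qed

lemma vecs_eq_vzero_iff:
  assumes "x \<in> vecs p n"
  shows "x = vzero \<longleftrightarrow> (\<forall>i<n. x i = 0)"
  using vecs_out[OF assms] unfolding vzero_def fun_eq_iff by (meson not_le)

lemma mod_in_vecs: "(\<And>i. n \<le> i \<Longrightarrow> x i = 0) \<Longrightarrow> (\<lambda>i. x i mod int p) \<in> vecs p n"
  unfolding vecs_def using p_pos by auto

lemma vadd_vecs [simp]: "x \<in> vecs p n \<Longrightarrow> y \<in> vecs p n \<Longrightarrow> vadd p x y \<in> vecs p n"
  unfolding vadd_def by (rule mod_in_vecs) (simp add: vecs_out)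

lemma vscale_vecs [simp]: "x \<in> vecs p n \<Longrightarrow> vscale p c x \<in> vecs p n"
  unfolding vscale_def by (rule mod_in_vecs) (simp add: vecs_out)

lemma vzero_vecs [simp]: "vzero \<in> vecs p n"
  unfolding vecs_def vzero_def using p_pos by auto

lemma bij_betw_vecs_PiE: "bij_betw (\<lambda>x. restrict x {..<n}) (vecs p n) ({..<n} \<rightarrow>\<^sub>E {0..<int p})"
proof (rule bij_betw_byWitness[where f' = "\<lambda>g i. if i < n then g i else 0"])
  show "\<forall>x\<in>vecs p n. (\<lambda>i. if i < n then restrict x {..<n} i else 0) = x"
    by (auto simp: vecs_def fun_eq_iff)
  show "\<forall>g\<in>{..<n} \<rightarrow>\<^sub>E {0..<int p}. restrict (\<lambda>i. if i < n then g i else 0) {..<n} = g"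
    by (auto simp: fun_eq_iff PiE_def extensional_def)
  show "(\<lambda>x. restrict x {..<n}) ` vecs p n \<subseteq> {..<n} \<rightarrow>\<^sub>E {0..<int p}"
  proof (rule image_subsetI)
    fix x assume "x \<in> vecs p n"
    then show "restrict x {..<n} \<in> {..<n} \<rightarrow>\<^sub>E {0..<int p}"
      unfolding restrict_PiE_iff vecs_def by auto
  qed
  show "(\<lambda>g i. if i < n then g i else 0) ` ({..<n} \<rightarrow>\<^sub>E {0..<int p}) \<subseteq> vecs p n"
  proof (rule image_subsetI)
    fix g assume "g \<in> {..<n} \<rightarrow>\<^sub>E {0..<int p}"
    then have "\<And>i. i < n \<Longrightarrow> g i \<in> {0..<int p}" using PiE_mem by blast
    then show "(\<lambda>i. if i < n then g i else 0) \<in> vecs p n" unfolding vecs_def by auto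
  qed
qed

lemma finite_vecs [simp]: "finite (vecs p n)"
  using bij_betw_finite[OF bij_betw_vecs_PiE] by (simp add: finite_PiE)

lemma card_vecs: "card (vecs p n) = p ^ n"
  using bij_betw_same_card[OF bij_betw_vecs_PiE] by (simp add: card_PiE)

lemma vadd_vzero [simp]: "x \<in> vecs p n \<Longrightarrow> vadd p x vzero = x"
  by (rule ext) (simp add: vadd_def vzero_def vecs_mod)

lemma vzero_vadd [simp]: "x \<in> vecs p n \<Longrightarrow> vadd p vzero x = x"
  by (rule ext) (simp add: vadd_def vzero_def vecs_mod)

lemma vadd_comm: "vadd p x y = vadd p y x"
  by (rule ext) (simp add: vadd_def add.commute)

lemma vadd_assoc: "vadd p (vadd p x y) z = vadd p x (vadd p y z)"
  by (rule ext) (simp add: vadd_def mod_simps add.assoc)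

lemma vscale_mod: "vscale p (k mod int p) x = vscale p k x"
  by (rule ext) (simp add: vscale_def mod_simps)

definition vneg :: "(nat \<Rightarrow> int) \<Rightarrow> (nat \<Rightarrow> int)" where
  "vneg x = vscale p (-1) x"

lemma vneg_vecs [simp]: "x \<in> vecs p n \<Longrightarrow> vneg x \<in> vecs p n"
  unfolding vneg_def by simp

lemma vadd_vneg [simp]: "vadd p x (vneg x) = vzero"
  by (rule ext) (simp add: vadd_def vneg_def vscale_def vzero_def mod_simps)

lemmas vec_defs = vadd_def vscale_def vneg_def

lemma vadd_inj_on:
  assumes "z \<in> vecs p n"
  shows "inj_on (vadd p z) (vecs p n)"
proof (rule inj_onI)
  fix x y assume x: "x \<in> vecs p n" and y: "y \<in> vecs p n" and e: "vadd p z x = vadd p z y"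
  show "x = y"
  proof (rule vecs_eqI[OF x y])
    fix i
    have "(z i + x i) mod int p = (z i + y i) mod int p"
      using fun_cong[OF e, of i] by (simp add: vadd_def)
    then show "x i mod int p = y i mod int p"
      by (simp add: mod_eq_dvd_iff)
  qed
qed

lemma vscale_inj_on:
  assumes "k mod int p \<noteq> 0"
  shows "inj_on (vscale p k) (vecs p n)"
proof (rule inj_onI)
  fix x y assume x: "x \<in> vecs p n" and y: "y \<in> vecs p n" and e: "vscale p k x = vscale p k y"
  show "x = y"
  proof (rule vecs_eqI[OF x y])
    fix i
    have "(k * x i) mod int p = (k * y i) mod int p"
      using fun_cong[OF e, of i] by (simp add: vscale_def)
    then have "int p dvd k * (x i - y i)"
      by (simp add: mod_eq_dvd_iff right_diff_distrib)
    then have "int p dvd k \<or> int p dvd x i - y i"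
      using prime_int_p prime_dvd_mult_iff by blast
    then have "int p dvd x i - y i"
      using assms by (auto simp: dvd_eq_mod_eq_0)
    then show "x i mod int p = y i mod int p"
      by (simp add: mod_eq_dvd_iff)
  qed
qed

lemma sum_inj_endo:
  assumes "finite X" "h ` X \<subseteq> X" "inj_on h X"
  shows "(\<Sum>x\<in>X. g (h x)) = (\<Sum>x\<in>X. g x)"
  using sum.reindex[OF assms(3), of g] endo_inj_surj[OF assms] by simp

lemma sum_vecs_translate: "z \<in> vecs p n \<Longrightarrow> (\<Sum>x\<in>vecs p n. g (vadd p z x)) = (\<Sum>x\<in>vecs p n. g x)"
  by (rule sum_inj_endo) (auto intro: vadd_inj_on)

lemma sum_vecs_translate': "z \<in> vecs p n \<Longrightarrow> (\<Sum>x\<in>vecs p n. g (vadd p x z)) = (\<Sum>x\<in>vecs p n. g x)"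
  using sum_vecs_translate[of z n g] by (simp add: vadd_comm)

lemma vadd_vneg_cancel:
  assumes "x \<in> vecs p n"
  shows "vadd p (vadd p x (vneg w)) w = x" "vadd p (vadd p x w) (vneg w) = x"
proof -
  have "vadd p (vadd p x (vneg w)) w = (\<lambda>i. x i mod int p)"
    "vadd p (vadd p x w) (vneg w) = (\<lambda>i. x i mod int p)"
    by (rule ext, simp only: vec_defs, simp add: mod_simps, (simp add: algebra_simps)?)+
  then show "vadd p (vadd p x (vneg w)) w = x" "vadd p (vadd p x w) (vneg w) = x"
    using vecs_mod[OF assms] by simp_all
qed

lemma vadd_left_comm: "vadd p x (vadd p y z) = vadd p y (vadd p x z)"
  by (rule ext) (simp add: vadd_def mod_simps algebra_simps)

lemma vadd_vneg_eq_vzero_iff: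
  assumes x: "x \<in> vecs p n" and y: "y \<in> vecs p n"
  shows "vadd p x (vneg y) = vzero \<longleftrightarrow> x = y"
proof
  assume "vadd p x (vneg y) = vzero"
  then have "y = vadd p y (vadd p x (vneg y))" using y by simp
  also have "\<dots> = x" using x by (simp add: vadd_left_comm)
  finally show "x = y" by simp
qed simp

lemma vscale_vscale: "vscale p a (vscale p b x) = vscale p (a * b) x"
  by (rule ext) (simp add: vscale_def mod_simps algebra_simps)

lemma vscale_one [simp]: "x \<in> vecs p n \<Longrightarrow> vscale p 1 x = x"
  by (rule ext) (simp add: vscale_def vecs_mod)

lemma inverse_mod_p:
  assumes "k mod int p \<noteq> 0"
  shows "\<exists>r. (r * k) mod int p = 1"
proof -
  have "coprime (int p) k"
    using assms prime_int_p by (simp add: prime_imp_coprime dvd_eq_mod_eq_0)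
  then obtain r s where "r * k + s * int p = 1"
    by (metis bezout_int coprime_iff_gcd_eq_1 gcd.commute)
  then have "(r * k) mod int p = 1 mod int p"
    by (metis mod_mult_self1)
  then show ?thesis
    using p_gt1 by auto
qed

lemma vscale_inverse:
  assumes "x \<in> vecs p n" "(r * k) mod int p = 1"
  shows "vscale p r (vscale p k x) = x"
  using assms vscale_mod[of "r * k" x] by (simp add: vscale_vscale)

end

section \<open>Subspaces and their cosets\<close>

context prime_field
begin

lemma subspace_subset: "is_subspace p n W \<Longrightarrow> W \<subseteq> vecs p n"
  unfolding is_subspace_def by auto

lemma subspace_vecs: "is_subspace p n W \<Longrightarrow> w \<in> W \<Longrightarrow> w \<in> vecs p n"
  unfolding is_subspace_def by auto

lemma finite_subspace: "is_subspace p n W \<Longrightarrow> finite W"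
  using finite_subset[OF subspace_subset finite_vecs] .

lemma subspace_vzero: "is_subspace p n W \<Longrightarrow> vzero \<in> W"
  unfolding is_subspace_def by auto

lemma subspace_vadd: "is_subspace p n W \<Longrightarrow> u \<in> W \<Longrightarrow> v \<in> W \<Longrightarrow> vadd p u v \<in> W"
  unfolding is_subspace_def by auto

lemma subspace_vscale:
  assumes "is_subspace p n W" "v \<in> W"
  shows "vscale p k v \<in> W"
proof -
  have "k mod int p \<in> {0..<int p}"
    using p_pos by simp
  then have "vscale p (k mod int p) v \<in> W"
    using assms unfolding is_subspace_def by blast
  then show ?thesis
    by (simp add: vscale_mod)
qed

lemma subspace_vscale_iff:
  assumes W: "is_subspace p n W" and x: "x \<in> vecs p n" and k: "k mod int p \<noteq> 0"
  shows "vscale p k x \<in> W \<longleftrightarrow> x \<in> W"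
proof
  obtain r where "(r * k) mod int p = 1"
    using inverse_mod_p[OF k] by blast
  moreover assume "vscale p k x \<in> W"
  ultimately show "x \<in> W"
    using subspace_vscale[OF W, of "vscale p k x" r] vscale_inverse[OF x] by simp
qed (rule subspace_vscale[OF W])

lemma card_subspace_pos: "is_subspace p n W \<Longrightarrow> card W > 0"
  using finite_subspace subspace_vzero by (auto simp: card_gt_0_iff)

lemma sum_subspace_translate:
  assumes W: "is_subspace p n W" and z: "z \<in> W"
  shows "(\<Sum>w\<in>W. g (vadd p z w)) = (\<Sum>w\<in>W. g w)"
proof (rule sum_inj_endo)
  show "inj_on (vadd p z) W"
    using inj_on_subset[OF vadd_inj_on[OF subspace_vecs[OF W z]] subspace_subset[OF W]] .
qed (use W z in \<open>auto intro: finite_subspace subspace_vadd\<close>)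

lemma sum_subspace_scale:
  assumes W: "is_subspace p n W" and k: "k mod int p \<noteq> 0"
  shows "(\<Sum>w\<in>W. g (vscale p k w)) = (\<Sum>w\<in>W. g w)"
proof (rule sum_inj_endo)
  show "inj_on (vscale p k) W"
    using inj_on_subset[OF vscale_inj_on[OF k] subspace_subset[OF W]] .
qed (use W in \<open>auto intro: finite_subspace subspace_vscale\<close>)

definition coset :: "(nat \<Rightarrow> int) set \<Rightarrow> (nat \<Rightarrow> int) \<Rightarrow> (nat \<Rightarrow> int) set" where
  "coset W x = vadd p x ` W"

lemma card_coset: "is_subspace p n W \<Longrightarrow> x \<in> vecs p n \<Longrightarrow> card (coset W x) = card W"
  unfolding coset_def by (rule card_image, rule inj_on_subset[OF vadd_inj_on subspace_subset])

lemma coset_subset: "is_subspace p n W \<Longrightarrow> x \<in> vecs p n \<Longrightarrow> coset W x \<subseteq> vecs p n"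
  unfolding coset_def using subspace_vecs by auto

lemma coset_self: "is_subspace p n W \<Longrightarrow> x \<in> vecs p n \<Longrightarrow> x \<in> coset W x"
  unfolding coset_def using subspace_vzero[of n W] by (metis image_eqI vadd_vzero)

lemma coset_subset_coset:
  assumes W: "is_subspace p n W" and w1: "w1 \<in> W" and w2: "w2 \<in> W"
    and eq: "vadd p x w1 = vadd p y w2"
  shows "coset W x \<subseteq> coset W y"
proof
  fix z assume "z \<in> coset W x"
  then obtain w where w: "w \<in> W" "z = vadd p x w"
    unfolding coset_def by blast
  have "vadd p x w = vadd p (vadd p (vadd p x w1) (vneg w1)) w"
    by (rule ext) (simp only: vec_defs, simp add: mod_simps, (simp add: algebra_simps)?)
  also have "\<dots> = vadd p y (vadd p (vadd p w2 (vneg w1)) w)"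
    unfolding eq by (rule ext) (simp only: vec_defs, simp add: mod_simps, (simp add: algebra_simps)?)
  finally have "z = vadd p y (vadd p (vadd p w2 (vneg w1)) w)"
    using w by simp
  moreover have "vadd p (vadd p w2 (vneg w1)) w \<in> W"
    using W w1 w2 w(1) unfolding vneg_def by (intro subspace_vadd subspace_vscale)
  ultimately show "z \<in> coset W y"
    unfolding coset_def by blast
qed

lemma card_subspace_dvd:
  assumes W: "is_subspace p n W"
  shows "card W dvd p ^ n"
proof -
  define C where "C = coset W ` vecs p n"
  have UC: "\<Union>C = vecs p n"
    unfolding C_def using coset_subset[OF W] coset_self[OF W] by blast
  have "card W * card C = card (\<Union>C)"
  proof (rule card_partition)
    show "finite C" "finite (\<Union>C)"
      using UC unfolding C_def by simp_all
    show "\<And>c. c \<in> C \<Longrightarrow> card c = card W"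
      unfolding C_def using card_coset[OF W] by blast
  next
    fix c1 c2 assume "c1 \<in> C" "c2 \<in> C" "c1 \<noteq> c2"
    then obtain x y where x: "x \<in> vecs p n" "c1 = coset W x"
      and y: "y \<in> vecs p n" "c2 = coset W y"
      unfolding C_def by blast
    show "c1 \<inter> c2 = {}"
    proof (rule ccontr)
      assume "c1 \<inter> c2 \<noteq> {}"
      then obtain w1 w2 where "w1 \<in> W" "w2 \<in> W" "vadd p x w1 = vadd p y w2"
        using x y unfolding coset_def by blast
      then have "c1 = c2"
        using x y coset_subset_coset[OF W] by (metis subset_antisym)
      with \<open>c1 \<noteq> c2\<close> show False ..
    qed
  qed
  then show ?thesis
    using UC card_vecs by (metis dvd_triv_left)
qed

lemma card_subspace_eq_power:
  assumes "is_subspace p n W"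
  obtains d where "d \<le> n" "card W = p ^ d"
  using card_subspace_dvd[OF assms] divides_primepow_nat[OF prime_p] by blast

lemma codim_eq:
  assumes "card W = p ^ d"
  shows "codim p n W = n - d"
proof -
  have "(THE d. card W = p ^ d) = d"
    using assms p_gt1 by (auto simp: power_inject_exp)
  then show ?thesis
    unfolding codim_def by simp
qed

end

section \<open>Characters and the Fourier transform\<close>

context prime_field
begin

definition ep :: "int \<Rightarrow> complex" where
  "ep t = cis (2 * pi * of_int t / real p)"

definition dot :: "nat \<Rightarrow> (nat \<Rightarrow> int) \<Rightarrow> (nat \<Rightarrow> int) \<Rightarrow> int" where
  "dot n a x = (\<Sum>i<n. a i * x i)"

definition chi :: "nat \<Rightarrow> (nat \<Rightarrow> int) \<Rightarrow> (nat \<Rightarrow> int) \<Rightarrow> complex" where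
  "chi n a x = ep (dot n a x)"

lemma ep_add: "ep (a + b) = ep a * ep b"
  unfolding ep_def by (simp add: cis_mult add_divide_distrib distrib_left)

lemma ep_zero [simp]: "ep 0 = 1"
  unfolding ep_def by simp

lemma ep_mod: "ep (a mod int p) = ep a"
proof -
  have "ep (int p * k) = 1" for k
  proof -
    have "2 * pi * of_int (int p * k) / real p = 2 * pi * of_int k"
      using p_gt1 by simp
    then show ?thesis
      unfolding ep_def by simp
  qed
  moreover have "ep a = ep (a mod int p) * ep (int p * (a div int p))"
    by (metis ep_add mod_mult_div_eq mult.commute add.commute)
  ultimately show ?thesis
    by simp
qed

lemma ep_cong: "a mod int p = b mod int p \<Longrightarrow> ep a = ep b"
  by (metis ep_mod)

lemma ep_uminus: "ep (- a) = cnj (ep a)"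
  unfolding ep_def by (simp add: cis_cnj)

lemma ep_eq_1_iff: "ep a = 1 \<longleftrightarrow> a mod int p = 0"
proof
  assume "ep a = 1"
  then have "cos (2 * pi * of_int a / real p) = 1"
    unfolding ep_def by (metis Re_complex_of_real cis.sel(1) of_real_1)
  then obtain k :: int where "2 * pi * of_int a / real p = of_int k * 2 * pi"
    using cos_one_2pi_int by blast
  then have "real_of_int a = of_int k * real p"
    using p_gt1 by (simp add: field_simps)
  then have "a = k * int p"
    by (metis of_int_eq_iff of_int_mult of_int_of_nat_eq)
  then show "a mod int p = 0"
    by simp
qed (use ep_mod[of a] in simp)

lemma dot_vadd_mod: "dot n a (vadd p x y) mod int p = (dot n a x + dot n a y) mod int p"
proof -
  have "dot n a (vadd p x y) mod int p = (\<Sum>i<n. (a i * ((x i + y i) mod int p)) mod int p) mod int p"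
    unfolding dot_def vadd_def by (simp add: mod_sum_eq)
  also have "\<dots> = (\<Sum>i<n. a i * (x i + y i)) mod int p"
    by (simp add: mod_mult_right_eq mod_sum_eq)
  finally show ?thesis
    unfolding dot_def by (simp add: distrib_left sum.distrib)
qed

lemma dot_vscale_mod: "dot n a (vscale p k x) mod int p = (k * dot n a x) mod int p"
proof -
  have "dot n a (vscale p k x) mod int p = (\<Sum>i<n. (a i * ((k * x i) mod int p)) mod int p) mod int p"
    unfolding dot_def vscale_def by (simp add: mod_sum_eq)
  also have "\<dots> = (\<Sum>i<n. a i * (k * x i)) mod int p"
    by (simp add: mod_mult_right_eq mod_sum_eq)
  finally show ?thesis
    unfolding dot_def by (simp add: sum_distrib_left algebra_simps)
qed

lemma dot_commute: "dot n a x = dot n x a"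
  unfolding dot_def by (simp add: mult.commute)

lemma chi_vadd: "chi n a (vadd p x y) = chi n a x * chi n a y"
  unfolding chi_def using ep_cong[OF dot_vadd_mod] ep_add by simp

lemma chi_vscale: "chi n a (vscale p k x) = ep (k * dot n a x)"
  unfolding chi_def using ep_cong[OF dot_vscale_mod] by simp

lemma chi_commute: "chi n a x = chi n x a"
  unfolding chi_def by (simp add: dot_commute)

lemma chi_vscale_left: "chi n (vscale p k a) x = ep (k * dot n a x)"
  by (simp add: chi_commute[of n _ x] chi_vscale dot_commute)

lemma chi_vzero [simp]: "chi n a vzero = 1" "chi n vzero a = 1"
  unfolding chi_def dot_def vzero_def by simp_all

lemma chi_vneg: "chi n a (vneg x) = cnj (chi n a x)"
  unfolding vneg_def chi_vscale by (simp add: ep_uminus chi_def)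

text \<open>Translating by a point where the character is not 1 rescales the sum.\<close>

lemma sum_chi_subspace:
  assumes W: "is_subspace p n W"
  shows "(\<Sum>w\<in>W. chi n a w) = (if \<forall>w\<in>W. chi n a w = 1 then of_nat (card W) else 0)"
proof (cases "\<forall>w\<in>W. chi n a w = 1")
  case False
  then obtain u where u: "u \<in> W" "chi n a u \<noteq> 1"
    by blast
  have "(\<Sum>w\<in>W. chi n a w) = (\<Sum>w\<in>W. chi n a (vadd p u w))"
    using sum_subspace_translate[OF W u(1), of "chi n a"] by simp
  also have "\<dots> = chi n a u * (\<Sum>w\<in>W. chi n a w)"
    by (simp add: chi_vadd sum_distrib_left)
  finally have "(1 - chi n a u) * (\<Sum>w\<in>W. chi n a w) = 0"
    by (simp add: algebra_simps)
  then show ?thesis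
    using u False by auto
qed simp

lemma vecs_subspace: "is_subspace p n (vecs p n)"
  unfolding is_subspace_def by simp

lemma unit_vec_vecs: "j < n \<Longrightarrow> (\<lambda>i. if i = j then 1 else 0) \<in> vecs p n"
  unfolding vecs_def using p_gt1 by auto

lemma sum_chi:
  assumes x: "x \<in> vecs p n"
  shows "(\<Sum>a\<in>vecs p n. chi n a x) = (if x = vzero then of_nat (p ^ n) else 0)"
proof -
  have "(\<exists>a\<in>vecs p n. chi n x a \<noteq> 1) \<longleftrightarrow> x \<noteq> vzero"
  proof
    assume "x \<noteq> vzero"
    then obtain j where j: "j < n" "x j \<noteq> 0"
      using vecs_eq_vzero_iff[OF x] by blast
    define u where "u = (\<lambda>i. if i = j then 1 else 0::int)"
    have "dot n u x = x j"
      unfolding dot_def u_def using j(1) by (simp add: if_distrib[where f = "\<lambda>c. c * _"] cong: if_cong)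
    then have "chi n x u \<noteq> 1"
      using j(2) vecs_mod[OF x, of j] by (simp add: chi_def dot_commute[of n x] ep_eq_1_iff)
    then show "\<exists>a\<in>vecs p n. chi n x a \<noteq> 1"
      using unit_vec_vecs[OF j(1)] unfolding u_def by blast
  qed auto
  moreover have "(\<Sum>a\<in>vecs p n. chi n a x) = (\<Sum>a\<in>vecs p n. chi n x a)"
    by (rule sum.cong[OF refl]) (rule chi_commute)
  ultimately show ?thesis
    using sum_chi_subspace[OF vecs_subspace, of n x] by (auto simp: card_vecs)
qed

definition fourier :: "nat \<Rightarrow> ((nat \<Rightarrow> int) \<Rightarrow> real) \<Rightarrow> (nat \<Rightarrow> int) \<Rightarrow> complex" where
  "fourier n f a = (\<Sum>x\<in>vecs p n. complex_of_real (f x) * chi n a x) / of_nat (p ^ n)"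

lemma sum_fourier_mult_cnj:
  "(\<Sum>a\<in>vecs p n. fourier n f a * cnj (fourier n f a))
     = complex_of_real ((\<Sum>x\<in>vecs p n. (f x)\<^sup>2) / real (p ^ n))"
proof -
  define N where "N = (of_nat (p ^ n) :: complex)"
  have N0: "N \<noteq> 0"
    unfolding N_def using p_gt1 by simp
  have orth: "(\<Sum>a\<in>vecs p n. chi n a (vadd p y (vneg x))) = (if y = x then N else 0)"
    if "x \<in> vecs p n" "y \<in> vecs p n" for x y
    using that sum_chi[of "vadd p y (vneg x)"] vadd_vneg_eq_vzero_iff unfolding N_def by simp
  have "(\<Sum>a\<in>vecs p n. fourier n f a * cnj (fourier n f a))
      = (\<Sum>a\<in>vecs p n. \<Sum>x\<in>vecs p n. \<Sum>y\<in>vecs p n.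
           of_real (f x) * of_real (f y) * chi n a (vadd p y (vneg x))) / (N * N)"
    unfolding fourier_def N_def
    by (simp add: sum_divide_distrib sum_distrib_left sum_distrib_right chi_vadd chi_vneg
        mult_ac sum_product[symmetric] flip: of_nat_mult)
  also have "\<dots> = (\<Sum>x\<in>vecs p n. \<Sum>y\<in>vecs p n.
           of_real (f x) * of_real (f y) * (\<Sum>a\<in>vecs p n. chi n a (vadd p y (vneg x)))) / (N * N)"
  proof -
    have "(\<Sum>a\<in>vecs p n. \<Sum>x\<in>vecs p n. \<Sum>y\<in>vecs p n. of_real (f x) * of_real (f y) * chi n a (vadd p y (vneg x)))
       = (\<Sum>x\<in>vecs p n. \<Sum>y\<in>vecs p n. \<Sum>a\<in>vecs p n. of_real (f x) * of_real (f y) * chi n a (vadd p y (vneg x)))"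
      by (subst sum.swap) (rule sum.cong[OF refl], rule sum.swap)
    then show ?thesis
      by (simp add: sum_distrib_left)
  qed
  also have "\<dots> = (\<Sum>x\<in>vecs p n. of_real (f x) * of_real (f x) * N) / (N * N)"
    by (simp add: orth if_distrib cong: if_cong)
  also have "\<dots> = (N * complex_of_real (\<Sum>x\<in>vecs p n. (f x)\<^sup>2)) / (N * N)"
    by (simp add: sum_distrib_left power2_eq_square mult_ac)
  also have "\<dots> = complex_of_real ((\<Sum>x\<in>vecs p n. (f x)\<^sup>2) / real (p ^ n))"
    using N0 unfolding N_def by simp
  finally show ?thesis .
qed

theorem parseval:
  "(\<Sum>a\<in>vecs p n. (cmod (fourier n f a))\<^sup>2) = (\<Sum>x\<in>vecs p n. (f x)\<^sup>2) / real (p ^ n)"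
proof -
  have "complex_of_real (\<Sum>a\<in>vecs p n. (cmod (fourier n f a))\<^sup>2)
      = (\<Sum>a\<in>vecs p n. fourier n f a * cnj (fourier n f a))"
    unfolding of_real_sum by (intro sum.cong refl) (rule complex_norm_square)
  then show ?thesis
    using sum_fourier_mult_cnj[of n f] of_real_eq_iff by metis
qed

lemma sum_fourier_norm_le_1:
  assumes "\<forall>x\<in>vecs p n. 0 \<le> f x \<and> f x \<le> 1"
  shows "(\<Sum>a\<in>vecs p n. (cmod (fourier n f a))\<^sup>2) \<le> 1"
proof -
  have "(\<Sum>x\<in>vecs p n. (f x)\<^sup>2) \<le> (\<Sum>x\<in>vecs p n. 1)"
    by (rule sum_mono) (use assms in \<open>auto simp: power_le_one\<close>)
  then show ?thesis
    unfolding parseval using p_gt1 by (simp add: card_vecs)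
qed

end

section \<open>Averaging over the annihilator of the large spectrum\<close>

context prime_field
begin

definition annihilator :: "nat \<Rightarrow> (nat \<Rightarrow> int) set \<Rightarrow> (nat \<Rightarrow> int) set" where
  "annihilator n S = {x \<in> vecs p n. \<forall>t\<in>S. chi n t x = 1}"

lemma annihilator_subspace: "is_subspace p n (annihilator n S)"
  unfolding is_subspace_def
proof (intro conjI ballI)
  fix c v assume v: "v \<in> annihilator n S"
  have "(c * dot n t v) mod int p = 0" if "t \<in> S" for t
  proof -
    have "dot n t v mod int p = 0"
      using v that unfolding annihilator_def chi_def by (auto simp: ep_eq_1_iff)
    then show ?thesis
      by (simp add: mod_mult_right_eq[symmetric])
  qed
  then show "vscale p c v \<in> annihilator n S"
    using v unfolding annihilator_def by (auto simp: chi_vscale ep_eq_1_iff)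
qed (auto simp: annihilator_def chi_vadd)

lemma in_coset_annihilator:
  assumes x0: "x0 \<in> vecs p n" and y: "y \<in> vecs p n"
    and dot: "\<forall>t\<in>S. dot n t y mod int p = dot n t x0 mod int p"
  shows "y \<in> coset (annihilator n S) x0"
proof -
  have "chi n t (vadd p y (vneg x0)) = 1" if "t \<in> S" for t
  proof -
    have "ep (dot n t y + - dot n t x0) = 1"
      using dot that ep_cong[of "dot n t y - dot n t x0" 0] by (simp add: mod_diff_cong)
    moreover have "chi n t (vadd p y (vneg x0)) = ep (dot n t y + - dot n t x0)"
      unfolding chi_vadd chi_vneg ep_add by (simp add: chi_def ep_uminus)
    ultimately show ?thesis
      by simp
  qed
  then have "vadd p y (vneg x0) \<in> annihilator n S"
    unfolding annihilator_def using y x0 by simp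
  moreover have "y = vadd p x0 (vadd p y (vneg x0))"
    using vadd_vneg_cancel(1)[OF y] by (simp add: vadd_comm)
  ultimately show ?thesis
    unfolding coset_def by blast
qed

text \<open>The fibres of x \<mapsto> (dot t x mod p) for t in S lie in cosets of the annihilator.\<close>

lemma card_annihilator:
  assumes S: "finite S"
  shows "p ^ n \<le> card (annihilator n S) * p ^ card S"
proof -
  define W where "W = annihilator n S"
  have W: "is_subspace p n W"
    unfolding W_def by (rule annihilator_subspace)
  define Phi where "Phi = (\<lambda>x. restrict (\<lambda>t. dot n t x mod int p) S)"
  define fibre where "fibre = (\<lambda>v. {x \<in> vecs p n. Phi x = v})"
  have "Phi ` vecs p n \<subseteq> S \<rightarrow>\<^sub>E {0..<int p}"
    unfolding Phi_def using p_pos by auto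
  then have card_image: "card (Phi ` vecs p n) \<le> p ^ card S"
    using card_mono[of "S \<rightarrow>\<^sub>E {0..<int p}"] S by (simp add: finite_PiE card_PiE)
  have card_fibre: "card (fibre (Phi x0)) \<le> card W" if x0: "x0 \<in> vecs p n" for x0
  proof -
    have "fibre (Phi x0) \<subseteq> coset W x0"
      unfolding W_def fibre_def using in_coset_annihilator[OF x0]
      by (auto simp: Phi_def restrict_def fun_eq_iff)
    then show ?thesis
      using card_mono[OF finite_subset[OF coset_subset[OF W x0]]] card_coset[OF W x0] by force
  qed
  have "vecs p n = (\<Union>v\<in>Phi ` vecs p n. fibre v)"
    unfolding fibre_def by auto
  then have "card (vecs p n) \<le> (\<Sum>v\<in>Phi ` vecs p n. card (fibre v))"
    by (metis card_UN_le finite_imageI finite_vecs)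
  also have "\<dots> \<le> (\<Sum>v\<in>Phi ` vecs p n. card W)"
    using card_fibre by (intro sum_mono) blast
  also have "\<dots> \<le> p ^ card S * card W"
    using card_image by simp
  finally show ?thesis
    unfolding W_def card_vecs by (simp add: mult.commute)
qed

lemma codim_annihilator_le:
  assumes "finite S"
  shows "codim p n (annihilator n S) \<le> card S"
proof -
  obtain d where d: "card (annihilator n S) = p ^ d"
    using card_subspace_eq_power[OF annihilator_subspace] by blast
  have "p ^ n \<le> p ^ (d + card S)"
    using card_annihilator[OF assms, of n] d by (simp add: power_add)
  then have "n \<le> d + card S"
    using p_gt1 by simp
  then show ?thesis
    using codim_eq[OF d] by simp
qed

lemma vecs_in_annihilator_annihilator:
  "S \<subseteq> vecs p n \<Longrightarrow> S \<subseteq> annihilator n (annihilator n S)"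
  unfolding annihilator_def by (auto simp: chi_commute)

lemma fourier_translate:
  assumes w: "w \<in> vecs p n"
  shows "fourier n (\<lambda>x. f (vadd p x w)) t = chi n t (vneg w) * fourier n f t"
proof -
  have "(\<Sum>x\<in>vecs p n. of_real (f (vadd p x w)) * chi n t x)
      = (\<Sum>x\<in>vecs p n. of_real (f (vadd p (vadd p (vneg w) x) w)) * chi n t (vadd p (vneg w) x))"
    using sum_vecs_translate[OF vneg_vecs[OF w], of "\<lambda>x. of_real (f (vadd p x w)) * chi n t x"] by simp
  also have "\<dots> = (\<Sum>x\<in>vecs p n. chi n t (vneg w) * (of_real (f x) * chi n t x))"
  proof (rule sum.cong[OF refl])
    fix x assume x: "x \<in> vecs p n"
    have "vadd p (vadd p (vneg w) x) w = x"
      using vadd_vneg_cancel(1)[OF x] by (simp add: vadd_comm)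
    then show "of_real (f (vadd p (vadd p (vneg w) x) w)) * chi n t (vadd p (vneg w) x)
        = chi n t (vneg w) * (of_real (f x) * chi n t x)"
      by (simp add: chi_vadd mult_ac)
  qed
  finally show ?thesis
    unfolding fourier_def by (simp add: sum_distrib_left)
qed

lemma fourier_favg:
  assumes W: "is_subspace p n W" and t: "t \<in> vecs p n"
  shows "fourier n (favg p W f) t = (if t \<in> annihilator n W then fourier n f t else 0)"
proof -
  define K where "K = (of_nat (card W) :: complex)"
  have K0: "K \<noteq> 0"
    unfolding K_def using card_subspace_pos[OF W] by simp
  have sum_W: "(\<Sum>w\<in>W. chi n t (vneg w)) = (if t \<in> annihilator n W then K else 0)"
  proof -
    have "(\<Sum>w\<in>W. chi n t (vneg w)) = (\<Sum>w\<in>W. chi n t w)"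
      unfolding vneg_def by (rule sum_subspace_scale[OF W minus_one_mod_p])
    then show ?thesis
      unfolding sum_chi_subspace[OF W] annihilator_def K_def using t by (simp add: chi_commute)
  qed
  have "fourier n (favg p W f) t
      = (\<Sum>x\<in>vecs p n. \<Sum>w\<in>W. of_real (f (vadd p x w)) * chi n t x) / of_nat (p ^ n) / K"
    unfolding fourier_def favg_def K_def by (simp add: sum_divide_distrib sum_distrib_left sum_distrib_right mult_ac)
  also have "\<dots> = (\<Sum>w\<in>W. fourier n (\<lambda>x. f (vadd p x w)) t) / K"
    unfolding fourier_def by (subst sum.swap) (simp add: sum_divide_distrib)
  also have "\<dots> = (\<Sum>w\<in>W. chi n t (vneg w)) * fourier n f t / K"
    using subspace_vecs[OF W] by (simp add: fourier_translate sum_distrib_right)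
  finally show ?thesis
    using K0 by (simp add: sum_W)
qed

definition trilinear ::
  "nat \<Rightarrow> ((nat \<Rightarrow> int) \<Rightarrow> real) \<Rightarrow> ((nat \<Rightarrow> int) \<Rightarrow> real) \<Rightarrow> ((nat \<Rightarrow> int) \<Rightarrow> real) \<Rightarrow> real" where
  "trilinear n a b c = (\<Sum>m\<in>vecs p n. \<Sum>d\<in>vecs p n. a m * b (vadd p m d) * c (vadd p m (vadd p d d)))"

lemma Lambda3_eq_trilinear: "Lambda3 p n f = trilinear n f f f / real p ^ (2 * n)"
  unfolding Lambda3_def trilinear_def ..

lemma trilinear_eq_sum_pairs:
  "trilinear n a b c = (\<Sum>x\<in>vecs p n. \<Sum>y\<in>vecs p n. a x * b y * c (vadd p (vscale p 2 y) (vneg x)))"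
  unfolding trilinear_def
proof (rule sum.cong[OF refl])
  fix m assume m: "m \<in> vecs p n"
  have "vadd p m (vadd p d d) = vadd p (vscale p 2 (vadd p m d)) (vneg m)" for d
    by (rule ext) (simp only: vec_defs, simp add: mod_simps, (simp add: algebra_simps)?)
  then show "(\<Sum>d\<in>vecs p n. a m * b (vadd p m d) * c (vadd p m (vadd p d d)))
      = (\<Sum>y\<in>vecs p n. a m * b y * c (vadd p (vscale p 2 y) (vneg m)))"
    using sum_vecs_translate[OF m, of "\<lambda>y. a m * b y * c (vadd p (vscale p 2 y) (vneg m))"] by simp
qed

lemma fourier_inversion:
  assumes w: "w \<in> vecs p n"
  shows "complex_of_real (c (vneg w)) = (\<Sum>t\<in>vecs p n. fourier n c t * chi n t w)"
proof -
  have delta: "(\<Sum>t\<in>vecs p n. chi n t (vadd p z w)) = (if z = vneg w then of_nat (p ^ n) else 0)"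
    if z: "z \<in> vecs p n" for z
  proof -
    have "vadd p z w = vzero \<longleftrightarrow> z = vneg w"
    proof
      assume "vadd p z w = vzero"
      then show "z = vneg w"
        using vadd_vneg_cancel(2)[OF z, of w] vzero_vadd[OF vneg_vecs[OF w]] by simp
    qed (simp add: vadd_comm)
    then show ?thesis
      using sum_chi[of "vadd p z w"] w z by simp
  qed
  have "fourier n c t * chi n t w = (\<Sum>z\<in>vecs p n. of_real (c z) * chi n t (vadd p z w)) / of_nat (p ^ n)"
    for t
    unfolding fourier_def chi_vadd by (simp add: sum_distrib_left sum_distrib_right mult_ac)
  then have "(\<Sum>t\<in>vecs p n. fourier n c t * chi n t w)
      = (\<Sum>t\<in>vecs p n. \<Sum>z\<in>vecs p n. of_real (c z) * chi n t (vadd p z w)) / of_nat (p ^ n)"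
    by (simp add: sum_divide_distrib)
  also have "\<dots> = (\<Sum>z\<in>vecs p n. of_real (c z) * (\<Sum>t\<in>vecs p n. chi n t (vadd p z w))) / of_nat (p ^ n)"
    by (subst sum.swap) (simp add: sum_distrib_left)
  also have "\<dots> = of_real (c (vneg w))"
    using w p_gt1 by (simp add: delta if_distrib cong: if_cong)
  finally show ?thesis ..
qed

theorem fourier_trilinear:
  "complex_of_real (trilinear n a b c)
     = of_nat (p ^ n) ^ 2 * (\<Sum>t\<in>vecs p n. fourier n a t * fourier n b (vscale p (-2) t) * fourier n c t)"
proof -
  define N where "N = (of_nat (p ^ n) :: complex)"
  have N_fourier: "(\<Sum>x\<in>vecs p n. complex_of_real (g x) * chi n t x) = N * fourier n g t" for g t
    unfolding fourier_def N_def using p_gt1 by simp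
  have inversion: "complex_of_real (c (vadd p (vscale p 2 y) (vneg x)))
      = (\<Sum>t\<in>vecs p n. fourier n c t * chi n t x * chi n (vscale p (-2) t) y)"
    if "x \<in> vecs p n" "y \<in> vecs p n" for x y
  proof -
    have "vneg (vadd p x (vscale p (-2) y)) = vadd p (vscale p 2 y) (vneg x)"
      by (rule ext) (simp only: vec_defs, simp add: mod_simps, (simp add: algebra_simps)?)
    then show ?thesis
      using fourier_inversion[of "vadd p x (vscale p (-2) y)" n c] that
      by (simp add: chi_vadd chi_vscale chi_vscale_left mult.assoc)
  qed
  have "complex_of_real (trilinear n a b c)
      = (\<Sum>x\<in>vecs p n. \<Sum>y\<in>vecs p n. \<Sum>t\<in>vecs p n.
           fourier n c t * ((of_real (a x) * chi n t x) * (of_real (b y) * chi n (vscale p (-2) t) y)))"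
    unfolding trilinear_eq_sum_pairs of_real_sum of_real_mult
    by (intro sum.cong refl) (simp add: inversion sum_distrib_left mult_ac)
  also have "\<dots> = (\<Sum>t\<in>vecs p n. \<Sum>x\<in>vecs p n. \<Sum>y\<in>vecs p n.
           fourier n c t * ((of_real (a x) * chi n t x) * (of_real (b y) * chi n (vscale p (-2) t) y)))"
    by (subst sum.swap) (rule sum.swap)
  also have "\<dots> = (\<Sum>t\<in>vecs p n. fourier n c t * ((N * fourier n a t) * (N * fourier n b (vscale p (-2) t))))"
    unfolding N_fourier[symmetric] sum_product by (simp add: sum_distrib_left)
  finally show ?thesis
    unfolding N_def by (simp add: sum_distrib_left power2_eq_square mult_ac)
qed

lemma Lambda3_fourier:
  "complex_of_real (Lambda3 p n f)
     = (\<Sum>t\<in>vecs p n. fourier n f t * fourier n f (vscale p (-2) t) * fourier n f t)"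
proof -
  have "complex_of_real (Lambda3 p n f) = complex_of_real (trilinear n f f f) / of_nat (p ^ n) ^ 2"
    unfolding Lambda3_eq_trilinear by (simp add: power_mult mult.commute)
  then show ?thesis
    unfolding fourier_trilinear using p_gt1 by simp
qed

end

locale odd_prime_field = prime_field +
  assumes odd_p: "odd p"
begin

lemma two_mod_p: "2 mod int p \<noteq> 0"
proof
  assume "2 mod int p = 0"
  then have "p dvd 2"
    by presburger
  then have "p = 2"
    using p_gt1 dvd_imp_le[of p 2] by linarith
  then show False
    using odd_p by simp
qed

lemma minus_two_mod_p: "- 2 mod int p \<noteq> 0"
  using two_mod_p by (simp add: mod_eq_0_iff_dvd)

text \<open>Averaging over W kills the Fourier coefficients outside the annihilator of W,
  which is invariant under multiplication by -2. If these are all smaller than \<delta>, each term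
  of the Fourier expansion of Lambda3 moves by at most \<delta> times a squared coefficient,
  and Parseval bounds the total.\<close>

lemma Lambda3_favg_le:
  assumes W: "is_subspace p n W" and \<delta>: "\<delta> > 0"
    and large: "\<forall>t\<in>vecs p n. \<delta> \<le> cmod (fourier n f t) \<longrightarrow> t \<in> annihilator n W"
    and f01: "\<forall>x\<in>vecs p n. 0 \<le> f x \<and> f x \<le> 1"
  shows "Lambda3 p n (favg p W f) \<le> Lambda3 p n f + \<delta>"
proof -
  define F where "F = fourier n f"
  define A where "A = annihilator n W"
  have A: "is_subspace p n A"
    unfolding A_def by (rule annihilator_subspace)
  have A_neg2: "vscale p (-2) t \<in> A \<longleftrightarrow> t \<in> A" if "t \<in> vecs p n" for t
    using subspace_vscale_iff[OF A that minus_two_mod_p] .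
  define df where "df = (\<lambda>t. if t \<in> A then 0 else - (F t * F (vscale p (-2) t) * F t))"
  have "complex_of_real (Lambda3 p n (favg p W f) - Lambda3 p n f) = (\<Sum>t\<in>vecs p n. df t)"
    unfolding of_real_diff Lambda3_fourier sum_subtractf[symmetric]
  proof (rule sum.cong[OF refl])
    fix t assume t: "t \<in> vecs p n"
    then show "fourier n (favg p W f) t * fourier n (favg p W f) (vscale p (-2) t) * fourier n (favg p W f) t
        - fourier n f t * fourier n f (vscale p (-2) t) * fourier n f t = df t"
      unfolding df_def F_def A_def[symmetric] fourier_favg[OF W t] fourier_favg[OF W vscale_vecs[OF t]]
      using A_neg2[OF t] by simp
  qed
  then have "\<bar>Lambda3 p n (favg p W f) - Lambda3 p n f\<bar> \<le> (\<Sum>t\<in>vecs p n. cmod (df t))"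
    by (metis norm_of_real norm_sum)
  also have "\<dots> \<le> (\<Sum>t\<in>vecs p n. \<delta> * (cmod (F t))\<^sup>2)"
  proof (rule sum_mono)
    fix t assume t: "t \<in> vecs p n"
    show "cmod (df t) \<le> \<delta> * (cmod (F t))\<^sup>2"
    proof (cases "t \<in> A")
      case False
      then have "cmod (F (vscale p (-2) t)) < \<delta>"
        using A_neg2[OF t] large t unfolding F_def A_def by force
      then have "cmod (F (vscale p (-2) t)) * (cmod (F t))\<^sup>2 \<le> \<delta> * (cmod (F t))\<^sup>2"
        by (intro mult_right_mono) auto
      then show ?thesis
        unfolding df_def using False by (simp add: norm_mult power2_eq_square mult_ac)
    qed (use \<delta> in \<open>simp add: df_def\<close>)
  qed
  also have "\<dots> \<le> \<delta>"
    using sum_fourier_norm_le_1[OF f01] \<delta> unfolding F_def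
    by (simp add: sum_distrib_left[symmetric] mult_le_cancel_left1)
  finally show ?thesis
    by simp
qed

text \<open>The annihilator of the large spectrum: by Parseval the spectrum has at most
  \<delta> to the power -2 elements.\<close>

theorem exists_subspace_Lambda3_favg_le:
  assumes \<delta>: "\<delta> > 0" and f01: "\<forall>x\<in>vecs p n. 0 \<le> f x \<and> f x \<le> 1"
  shows "\<exists>W. is_subspace p n W \<and> real (codim p n W) \<le> 1 / \<delta>\<^sup>2 \<and>
             Lambda3 p n (favg p W f) \<le> Lambda3 p n f + \<delta>"
proof -
  define S where "S = {t \<in> vecs p n. \<delta> \<le> cmod (fourier n f t)}"
  define W where "W = annihilator n S"
  have W: "is_subspace p n W"
    unfolding W_def by (rule annihilator_subspace)
  have "real (card S) * \<delta>\<^sup>2 = (\<Sum>t\<in>S. \<delta>\<^sup>2)"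
    by simp
  also have "\<dots> \<le> (\<Sum>t\<in>S. (cmod (fourier n f t))\<^sup>2)"
    by (rule sum_mono) (use \<delta> in \<open>auto simp: S_def intro!: power_mono\<close>)
  also have "\<dots> \<le> (\<Sum>t\<in>vecs p n. (cmod (fourier n f t))\<^sup>2)"
    by (rule sum_mono2) (auto simp: S_def)
  also have "\<dots> \<le> 1"
    by (rule sum_fourier_norm_le_1[OF f01])
  finally have "real (card S) \<le> 1 / \<delta>\<^sup>2"
    using \<delta> by (simp add: field_simps)
  moreover have "codim p n W \<le> card S"
    unfolding W_def by (rule codim_annihilator_le) (simp add: S_def)
  moreover have "Lambda3 p n (favg p W f) \<le> Lambda3 p n f + \<delta>"
    by (rule Lambda3_favg_le[OF W \<delta> _ f01])
      (use vecs_in_annihilator_annihilator[of S n] in \<open>auto simp: W_def S_def\<close>)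
  ultimately show ?thesis
    using W by force
qed

end

section \<open>Three-term progressions in the integers modulo p\<close>

lemma sum_lessThan_double_diff: "(\<Sum>t<m. 2 * m - 2 * t) = m * (m + 1 :: nat)"
proof (induction m)
  case (Suc m)
  have "(\<Sum>t<Suc m. 2 * Suc m - 2 * t) = (\<Sum>t<m. (2 * m - 2 * t) + 2) + 2"
    by (simp add: sum.lessThan_Suc) (intro sum.cong refl, simp)
  also have "\<dots> = m * (m + 1) + 2 * m + 2"
    unfolding sum.distrib Suc.IH by simp
  finally show ?case
    by simp
qed simp

context prime_field
begin

definition periodic_mod_p :: "(int \<Rightarrow> real) \<Rightarrow> bool" where
  "periodic_mod_p P \<longleftrightarrow> (\<forall>x. P (x mod int p) = P x)"

lemma periodic_mod_pD: "periodic_mod_p P \<Longrightarrow> P (x mod int p) = P x"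
  unfolding periodic_mod_p_def by blast

lemma periodic_mod_p_cong: "periodic_mod_p P \<Longrightarrow> x mod int p = y mod int p \<Longrightarrow> P x = P y"
  by (metis periodic_mod_pD)

lemma sum_Zp_affine:
  assumes a: "a mod int p \<noteq> 0"
  shows "(\<Sum>t\<in>{0..<int p}. H ((b + a * t) mod int p)) = (\<Sum>t\<in>{0..<int p}. H t)"
proof (rule sum_inj_endo)
  show "inj_on (\<lambda>t. (b + a * t) mod int p) {0..<int p}"
  proof (rule inj_onI)
    fix x y assume x: "x \<in> {0..<int p}" and y: "y \<in> {0..<int p}"
      and "(b + a * x) mod int p = (b + a * y) mod int p"
    then have "int p dvd a * (x - y)"
      by (simp add: mod_eq_dvd_iff algebra_simps)
    then have "int p dvd a \<or> int p dvd (x - y)"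
      using prime_int_p prime_dvd_mult_iff by blast
    then have "x mod int p = y mod int p"
      using a by (auto simp: dvd_eq_mod_eq_0 mod_eq_dvd_iff)
    then show "x = y"
      using x y by simp
  qed
qed (use p_pos in auto)

lemma sum_Zp_periodic_affine:
  assumes "periodic_mod_p P" "a mod int p \<noteq> 0"
  shows "(\<Sum>t\<in>{0..<int p}. P (b + a * t)) = (\<Sum>t\<in>{0..<int p}. P t)"
  using sum_Zp_affine[OF assms(2), of P b] periodic_mod_pD[OF assms(1)] by simp

lemma sum_Zp_translate:
  assumes "periodic_mod_p P"
  shows "(\<Sum>t\<in>{0..<int p}. P (b + t)) = (\<Sum>t\<in>{0..<int p}. P t)"
  using sum_Zp_periodic_affine[OF assms, of 1 b] p_gt1 by simp

lemma periodic_mod_p_mult_add: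
  assumes "periodic_mod_p P"
  shows "P (k * (x mod int p) + y) = P (k * x + y)"
  by (rule periodic_mod_p_cong[OF assms]) (metis mod_add_left_eq mod_mult_right_eq)

lemma sum_Zp_ap3_translate:
  assumes P: "periodic_mod_p P" and e: "(e - 2 * b + a) mod int p = 0"
  shows "(\<Sum>s\<in>{0..<int p}. \<Sum>t\<in>{0..<int p}. P (s + a) * P (s + (b + t)) * P (s + (e + 2 * t)))
       = (\<Sum>s\<in>{0..<int p}. \<Sum>t\<in>{0..<int p}. P s * P (s + t) * P (s + 2 * t))"
proof -
  note shift = periodic_mod_p_mult_add[OF P, where k = 1, simplified]
    periodic_mod_p_mult_add[OF P, where k = 2]
  define G where "G = (\<lambda>s. \<Sum>t\<in>{0..<int p}. P (s + a) * P (s + (b + t)) * P (s + (e + 2 * t)))"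
  have "periodic_mod_p G"
    unfolding G_def periodic_mod_p_def by (intro allI) (simp only: shift add.assoc)
  then have "(\<Sum>s\<in>{0..<int p}. G s) = (\<Sum>s\<in>{0..<int p}. G (- a + s))"
    by (rule sum_Zp_translate[symmetric])
  also have "\<dots> = (\<Sum>s\<in>{0..<int p}. \<Sum>t\<in>{0..<int p}. P s * P (t + (s + (b - a))) * P (2 * t + (s + (e - a))))"
    unfolding G_def by (intro sum.cong refl) (simp add: algebra_simps)
  also have "\<dots> = (\<Sum>s\<in>{0..<int p}. \<Sum>t\<in>{0..<int p}. P s * P (s + t) * P (s + 2 * t))"
  proof (rule sum.cong[OF refl])
    fix s
    define H where "H = (\<lambda>t. P s * P (t + (s + (b - a))) * P (2 * t + (s + (e - a))))"
    have "periodic_mod_p H"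
      unfolding H_def periodic_mod_p_def by (intro allI) (simp only: shift)
    then have "(\<Sum>t\<in>{0..<int p}. H t) = (\<Sum>t\<in>{0..<int p}. H (- (b - a) + t))"
      by (rule sum_Zp_translate[symmetric])
    also have "\<dots> = (\<Sum>t\<in>{0..<int p}. P s * P (s + t) * P (s + 2 * t))"
    proof (rule sum.cong[OF refl])
      fix t
      have "- (b - a) + t + (s + (b - a)) = s + t"
        by simp
      moreover have "P (2 * (- (b - a) + t) + (s + (e - a))) = P (s + 2 * t)"
        by (rule periodic_mod_p_cong[OF P]) (use e in \<open>simp add: mod_eq_dvd_iff dvd_eq_mod_eq_0[symmetric] algebra_simps\<close>)
      ultimately show "H (- (b - a) + t) = P s * P (s + t) * P (s + 2 * t)"
        unfolding H_def by (simp only:)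
    qed
    finally show "(\<Sum>t\<in>{0..<int p}. P s * P (t + (s + (b - a))) * P (2 * t + (s + (e - a))))
        = (\<Sum>t\<in>{0..<int p}. P s * P (s + t) * P (s + 2 * t))"
      unfolding H_def .
  qed
  finally show ?thesis
    unfolding G_def .
qed

definition ind_Zp :: "int set \<Rightarrow> int \<Rightarrow> real" where
  "ind_Zp A t = indicator A (t mod int p)"

definition balanced :: "int set \<Rightarrow> int \<Rightarrow> real" where
  "balanced A t = real (card A) / real p - ind_Zp A t"

definition ap3_count :: "int set \<Rightarrow> real" where
  "ap3_count A = (\<Sum>s\<in>{0..<int p}. \<Sum>t\<in>{0..<int p}. ind_Zp A s * ind_Zp A (s + t) * ind_Zp A (s + 2 * t))"

definition Lambda3_Zp :: "(int \<Rightarrow> real) \<Rightarrow> real" where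
  "Lambda3_Zp P = (\<Sum>s\<in>{0..<int p}. \<Sum>t\<in>{0..<int p}. P s * P (s + t) * P (s + 2 * t)) / real p ^ 2"

lemma ind_Zp_nonneg: "ind_Zp A t \<ge> 0"
  unfolding ind_Zp_def by simp

lemma ind_Zp_mod_add: "ind_Zp A (x mod int p + y) = ind_Zp A (x + y)"
  unfolding ind_Zp_def by (simp add: mod_simps)

lemma periodic_balanced: "periodic_mod_p (balanced A)"
  unfolding periodic_mod_p_def balanced_def ind_Zp_def by simp

lemma sum_ind_Zp_affine:
  assumes A: "A \<subseteq> {0..<int p}" and a: "a mod int p \<noteq> 0"
  shows "(\<Sum>t\<in>{0..<int p}. ind_Zp A (b + a * t)) = real (card A)"
proof -
  have "(\<Sum>t\<in>{0..<int p}. ind_Zp A (b + a * t)) = (\<Sum>t\<in>{0..<int p}. indicator A t)"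
    unfolding ind_Zp_def by (rule sum_Zp_affine[OF a])
  also have "\<dots> = real (card A)"
    using A by (simp add: sum_indicator_subset)
  finally show ?thesis .
qed

lemma sum_ind_Zp:
  assumes "A \<subseteq> {0..<int p}"
  shows "(\<Sum>t\<in>{0..<int p}. ind_Zp A t) = real (card A)"
  using sum_ind_Zp_affine[OF assms, of 1 0] p_gt1 by simp

lemma sum_balanced:
  assumes "A \<subseteq> {0..<int p}"
  shows "(\<Sum>t\<in>{0..<int p}. balanced A t) = 0"
  unfolding balanced_def using sum_ind_Zp[OF assms] p_gt1 by (simp add: sum_subtractf)

lemma ap3_count_singleton: "ap3_count {0} \<ge> 1"
proof -
  have z: "(0::int) \<in> {0..<int p}"
    using p_gt1 by simp
  have "1 \<le> (\<Sum>t\<in>{0..<int p}. ind_Zp {0} 0 * ind_Zp {0} (0 + t) * ind_Zp {0} (0 + 2 * t))"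
    using member_le_sum[OF z, of "\<lambda>t. ind_Zp {0} 0 * ind_Zp {0} (0 + t) * ind_Zp {0} (0 + 2 * t)"]
    by (simp add: ind_Zp_def)
  also have "\<dots> \<le> ap3_count {0}"
    unfolding ap3_count_def
    by (rule member_le_sum[OF z]) (auto simp: ind_Zp_def intro!: sum_nonneg)
  finally show ?thesis .
qed

lemma sum_lessThan_le_sum_Zp:
  assumes "m \<le> p" and "\<And>t. t \<in> {0..<int p} \<Longrightarrow> Y t \<ge> (0::real)"
  shows "(\<Sum>t<m. Y (int t)) \<le> (\<Sum>t\<in>{0..<int p}. Y t)"
proof -
  have "(\<Sum>t<m. Y (int t)) = sum Y (int ` {..<m})"
    by (simp add: sum.reindex)
  also have "\<dots> \<le> (\<Sum>t\<in>{0..<int p}. Y t)"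
    by (rule sum_mono2) (use assms in auto)
  finally show ?thesis .
qed

text \<open>An interval of length 2 m contains the progressions s, s + t, s + 2 t with
  t < m and s + 2 t < 2 m.\<close>

lemma ap3_count_interval:
  assumes m: "2 * m \<le> p"
  shows "ap3_count {0..<2 * int m} \<ge> real m ^ 2"
proof -
  define A where "A = {0..<2 * int m}"
  define X where "X = (\<lambda>s t. ind_Zp A s * ind_Zp A (s + t) * ind_Zp A (s + 2 * t))"
  have X_nonneg: "X s t \<ge> 0" for s t
    unfolding X_def by (simp add: ind_Zp_nonneg)
  have "real m ^ 2 \<le> real (\<Sum>t<m. 2 * m - 2 * t)"
    unfolding sum_lessThan_double_diff by (simp add: power2_eq_square)
  also have "\<dots> = (\<Sum>t<m. \<Sum>s<2 * m - 2 * t. (1::real))"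
    by simp
  also have "\<dots> = (\<Sum>t<m. \<Sum>s<2 * m - 2 * t. X (int s) (int t))"
  proof (intro sum.cong refl)
    fix t s assume "t \<in> {..<m}" "s \<in> {..<2 * m - 2 * t}"
    then have "s + 2 * t < 2 * m"
      by auto
    then show "1 = X (int s) (int t)"
      unfolding X_def ind_Zp_def A_def using m by auto
  qed
  also have "\<dots> \<le> (\<Sum>t<m. \<Sum>s\<in>{0..<int p}. X s (int t))"
    by (rule sum_mono, rule sum_lessThan_le_sum_Zp) (use m X_nonneg in auto)
  also have "\<dots> \<le> (\<Sum>t\<in>{0..<int p}. \<Sum>s\<in>{0..<int p}. X s t)"
    by (rule sum_lessThan_le_sum_Zp) (use m in \<open>auto intro: sum_nonneg X_nonneg\<close>)
  also have "\<dots> = ap3_count A"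
    unfolding ap3_count_def X_def by (rule sum.swap)
  finally show ?thesis
    unfolding A_def .
qed

text \<open>Sets with many more progressions than a random set of the same density.\<close>

lemma ap3_rich_singleton:
  assumes "p \<le> 62"
  shows "real (card {0::int}) ^ 3 / real p - ap3_count {0} \<le> - real p / 64"
proof -
  have "(real p - 1) * (63 - real p) \<ge> 1 * 1"
    by (intro mult_mono) (use assms p_gt1 in auto)
  then have "real p * real p \<le> 64 * real p - 64"
    by (simp add: algebra_simps)
  then have "1 / real p - 1 \<le> - real p / 64"
    using p_gt1 by (simp add: field_simps)
  then show ?thesis
    using ap3_count_singleton by simp
qed

lemma ap3_rich_interval:
  assumes "63 \<le> p" "16 * m \<le> p" "p < 16 * m + 16"
  shows "real (card {0..<2 * int m}) ^ 3 / real p - ap3_count {0..<2 * int m} \<le> - real p / 64"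
proof -
  have m1: "16 * real m \<le> real p" and m2: "real p - 15 \<le> 16 * real m"
    using assms(2,3) by linarith+
  have rp: "real p \<ge> 63"
    using assms(1) by simp
  have "(real p - 19) * (real p - 19) \<ge> 44 * 44"
    by (rule mult_mono) (use rp in auto)
  then have "(real p - 15) * (real p - 15) \<ge> 8 * real p"
    by (simp add: algebra_simps)
  moreover have "(real p - 15) * (real p - 15) \<le> (16 * real m) * (16 * real m)"
    by (rule mult_mono) (use m2 rp in auto)
  ultimately have k1: "32 * real m ^ 2 \<ge> real p"
    by (simp add: power2_eq_square)
  have k2: "real p - 8 * real m \<ge> real p / 2"
    using m1 by simp
  have "real p * real p \<le> (32 * real m ^ 2) * real p"
    by (rule mult_right_mono[OF k1]) simp
  also have "\<dots> = 64 * real m ^ 2 * (real p / 2)"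
    by simp
  also have "\<dots> \<le> 64 * real m ^ 2 * (real p - 8 * real m)"
    by (rule mult_left_mono[OF k2]) simp
  finally have key: "real p * real p \<le> 64 * real m ^ 2 * (real p - 8 * real m)" .
  have "real (card {0..<2 * int m}) ^ 3 / real p - ap3_count {0..<2 * int m}
      \<le> 8 * real m ^ 3 / real p - real m ^ 2"
    using ap3_count_interval[of m] assms(2) by (simp add: power3_eq_cube)
  also have "\<dots> \<le> - real p / 64"
  proof -
    have "(8 * real m ^ 3 / real p - real m ^ 2) * (64 * real p) = 512 * real m ^ 3 - 64 * real m ^ 2 * real p"
      using rp by (simp add: field_simps power3_eq_cube power2_eq_square)
    also have "\<dots> = - (64 * real m ^ 2 * (real p - 8 * real m))"
      by (simp add: algebra_simps power3_eq_cube power2_eq_square)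
    also have "\<dots> \<le> - (real p * real p)"
      using key by simp
    also have "\<dots> = (- real p / 64) * (64 * real p)"
      by simp
    finally show ?thesis
      by (rule mult_right_le_imp_le) (use rp in simp)
  qed
  finally show ?thesis .
qed

lemma exists_ap3_rich_set:
  "\<exists>A. A \<subseteq> {0..<int p} \<and> real (card A) ^ 3 / real p - ap3_count A \<le> - real p / 64"
proof (cases "p \<le> 62")
  case True
  then show ?thesis
    using ap3_rich_singleton p_gt1 by (intro exI[of _ "{0}"]) simp
next
  case False
  define m where "m = p div 16"
  have "16 * m \<le> p" "p < 16 * m + 16"
    unfolding m_def by simp_all
  then show ?thesis
    using False ap3_rich_interval[of m] by (intro exI[of _ "{0..<2 * int m}"]) auto
qed

end

context odd_prime_field
begin

text \<open>Any two of s, s + t, s + 2 t determine the progression.\<close>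

lemma sum_ind_Zp_pairs:
  assumes A: "A \<subseteq> {0..<int p}"
  defines "I \<equiv> ind_Zp A" and "Z \<equiv> {0..<int p}"
  shows "(\<Sum>s\<in>Z. \<Sum>t\<in>Z. I s) = real p * real (card A)"
    "(\<Sum>s\<in>Z. \<Sum>t\<in>Z. I (s + t)) = real p * real (card A)"
    "(\<Sum>s\<in>Z. \<Sum>t\<in>Z. I (s + 2 * t)) = real p * real (card A)"
    "(\<Sum>s\<in>Z. \<Sum>t\<in>Z. I s * I (s + t)) = real (card A) ^ 2"
    "(\<Sum>s\<in>Z. \<Sum>t\<in>Z. I s * I (s + 2 * t)) = real (card A) ^ 2"
    "(\<Sum>s\<in>Z. \<Sum>t\<in>Z. I (s + t) * I (s + 2 * t)) = real (card A) ^ 2"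
proof -
  have affine: "(\<Sum>t\<in>Z. I (c + a * t)) = real (card A)" if "a mod int p \<noteq> 0" for a c
    unfolding Z_def I_def by (rule sum_ind_Zp_affine[OF A that])
  have unit1: "(1::int) mod int p \<noteq> 0"
    using p_gt1 by simp
  have single: "(\<Sum>t\<in>Z. I t) = real (card A)"
    unfolding Z_def I_def by (rule sum_ind_Zp[OF A])
  show "(\<Sum>s\<in>Z. \<Sum>t\<in>Z. I s) = real p * real (card A)"
    "(\<Sum>s\<in>Z. \<Sum>t\<in>Z. I (s + t)) = real p * real (card A)"
    "(\<Sum>s\<in>Z. \<Sum>t\<in>Z. I (s + 2 * t)) = real p * real (card A)"
    using single affine[OF unit1] affine[OF two_mod_p] unfolding Z_def
    by (simp_all add: sum_distrib_left[symmetric])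
  show pair: "(\<Sum>s\<in>Z. \<Sum>t\<in>Z. I s * I (s + t)) = real (card A) ^ 2"
    "(\<Sum>s\<in>Z. \<Sum>t\<in>Z. I s * I (s + 2 * t)) = real (card A) ^ 2"
    using affine[OF unit1] affine[OF two_mod_p] single
    by (simp_all add: sum_distrib_left[symmetric] sum_distrib_right[symmetric] power2_eq_square)
  have "(\<Sum>s\<in>Z. \<Sum>t\<in>Z. I (s + t) * I (s + 2 * t)) = (\<Sum>t\<in>Z. \<Sum>s\<in>Z. I (t + s) * I (t + s + t))"
    by (subst sum.swap) (simp add: algebra_simps)
  also have "\<dots> = (\<Sum>t\<in>Z. \<Sum>s\<in>Z. I s * I (s + t))"
  proof (rule sum.cong[OF refl])
    fix t
    have "periodic_mod_p (\<lambda>s. I s * I (s + t))"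
      unfolding periodic_mod_p_def I_def by (simp add: ind_Zp_mod_add) (simp add: ind_Zp_def)
    from sum_Zp_translate[OF this, of t] show "(\<Sum>s\<in>Z. I (t + s) * I (t + s + t)) = (\<Sum>s\<in>Z. I s * I (s + t))"
      unfolding Z_def .
  qed
  also have "\<dots> = real (card A) ^ 2"
    using pair(1) by (subst sum.swap) simp
  finally show "(\<Sum>s\<in>Z. \<Sum>t\<in>Z. I (s + t) * I (s + 2 * t)) = real (card A) ^ 2" .
qed

lemma Lambda3_Zp_balanced:
  assumes A: "A \<subseteq> {0..<int p}"
  shows "Lambda3_Zp (balanced A) = (real (card A) ^ 3 / real p - ap3_count A) / real p ^ 2"
proof -
  define b where "b = real (card A) / real p"
  define k where "k = real (card A)"
  define Z where "Z = {0..<int p}"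
  define I where "I = ind_Zp A"
  have expand: "balanced A s * balanced A (s + t) * balanced A (s + 2 * t) =
      b^3 - b^2 * I s - b^2 * I (s + t) - b^2 * I (s + 2 * t)
      + b * (I s * I (s + t)) + b * (I s * I (s + 2 * t)) + b * (I (s + t) * I (s + 2 * t))
      - I s * I (s + t) * I (s + 2 * t)" for s t
    unfolding balanced_def b_def[symmetric] I_def by (simp add: algebra_simps power2_eq_square power3_eq_cube)
  have "(\<Sum>s\<in>Z. \<Sum>t\<in>Z. balanced A s * balanced A (s + t) * balanced A (s + 2 * t))
     = (\<Sum>s\<in>Z. \<Sum>t\<in>Z. b^3) - b^2 * (\<Sum>s\<in>Z. \<Sum>t\<in>Z. I s) - b^2 * (\<Sum>s\<in>Z. \<Sum>t\<in>Z. I (s + t))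
       - b^2 * (\<Sum>s\<in>Z. \<Sum>t\<in>Z. I (s + 2 * t))
       + b * (\<Sum>s\<in>Z. \<Sum>t\<in>Z. I s * I (s + t)) + b * (\<Sum>s\<in>Z. \<Sum>t\<in>Z. I s * I (s + 2 * t))
       + b * (\<Sum>s\<in>Z. \<Sum>t\<in>Z. I (s + t) * I (s + 2 * t))
       - (\<Sum>s\<in>Z. \<Sum>t\<in>Z. I s * I (s + t) * I (s + 2 * t))"
    unfolding expand by (simp add: sum.distrib sum_subtractf sum_distrib_left right_diff_distrib mult_ac)
  also have "\<dots> = real p * real p * b^3 - 3 * (b^2 * (real p * k)) + 3 * (b * k ^ 2) - ap3_count A"
    unfolding Z_def I_def sum_ind_Zp_pairs[OF A] k_def using p_gt1 by (simp add: ap3_count_def)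
  also have "\<dots> = k ^ 3 / real p - ap3_count A"
    unfolding b_def k_def using p_gt1 by (simp add: field_simps power2_eq_square power3_eq_cube)
  finally show ?thesis
    unfolding Lambda3_Zp_def k_def Z_def by simp
qed

lemma exists_balanced_Lambda3_Zp_le:
  "\<exists>A. A \<subseteq> {0..<int p} \<and> Lambda3_Zp (balanced A) \<le> - 1 / (64 * real p)"
proof -
  obtain A where A: "A \<subseteq> {0..<int p}" and rich: "real (card A) ^ 3 / real p - ap3_count A \<le> - real p / 64"
    using exists_ap3_rich_set by blast
  have "Lambda3_Zp (balanced A) \<le> (- real p / 64) / real p ^ 2"
    unfolding Lambda3_Zp_balanced[OF A] by (rule divide_right_mono[OF rich]) simp
  also have "\<dots> = - 1 / (64 * real p)"
    using p_gt1 by (simp add: power2_eq_square field_simps)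
  finally show ?thesis
    using A by blast
qed

end

section \<open>Perturbing a W-invariant function along a direction of W\<close>

context prime_field
begin

definition translation_invariant :: "nat \<Rightarrow> (nat \<Rightarrow> int) set \<Rightarrow> ((nat \<Rightarrow> int) \<Rightarrow> real) \<Rightarrow> bool" where
  "translation_invariant n W h \<longleftrightarrow> (\<forall>x\<in>vecs p n. \<forall>w\<in>W. h (vadd p x w) = h x)"

lemma translation_invariant_vscale:
  assumes "translation_invariant n W h" "is_subspace p n W" "x \<in> vecs p n" "w \<in> W"
  shows "h (vadd p x (vscale p k w)) = h x"
  using assms subspace_vscale unfolding translation_invariant_def by blast

lemma favg_translation_invariant:
  assumes W: "is_subspace p n W"
  shows "translation_invariant n W (favg p W f)"
  unfolding translation_invariant_def
proof (intro ballI)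
  fix x w assume "x \<in> vecs p n" "w \<in> W"
  then have "(\<Sum>w'\<in>W. f (vadd p (vadd p x w) w')) = (\<Sum>w'\<in>W. f (vadd p x w'))"
    using sum_subspace_translate[OF W, of w "\<lambda>z. f (vadd p x z)"] by (simp add: vadd_assoc)
  then show "favg p W f (vadd p x w) = favg p W f x"
    unfolding favg_def by simp
qed

lemma trilinear_add:
  "trilinear n (\<lambda>x. a x + a' x) b c = trilinear n a b c + trilinear n a' b c"
  "trilinear n a (\<lambda>x. b x + b' x) c = trilinear n a b c + trilinear n a b' c"
  "trilinear n a b (\<lambda>x. c x + c' x) = trilinear n a b c + trilinear n a b c'"
  unfolding trilinear_def by (simp_all add: algebra_simps sum.distrib)

lemma sum_pairs_translate:
  assumes "w1 \<in> vecs p n" "w2 \<in> vecs p n"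
  shows "(\<Sum>m\<in>vecs p n. \<Sum>d\<in>vecs p n. G m d) = (\<Sum>m\<in>vecs p n. \<Sum>d\<in>vecs p n. G (vadd p m w1) (vadd p d w2))"
proof -
  have "(\<Sum>m\<in>vecs p n. \<Sum>d\<in>vecs p n. G m d) = (\<Sum>m\<in>vecs p n. \<Sum>d\<in>vecs p n. G m (vadd p d w2))"
    by (rule sum.cong[OF refl]) (rule sum_vecs_translate'[OF assms(2), symmetric])
  also have "\<dots> = (\<Sum>m\<in>vecs p n. \<Sum>d\<in>vecs p n. G (vadd p m w1) (vadd p d w2))"
    by (rule sum_vecs_translate'[OF assms(1), symmetric])
  finally show ?thesis .
qed

text \<open>Translating by multiples of w0 shifts the coordinate i0 through all residues.\<close>

lemma sum_subspace_coordinate: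
  assumes W: "is_subspace p n W" and w0: "w0 \<in> W" and a: "w0 i0 mod int p \<noteq> 0"
  shows "(\<Sum>w\<in>W. H (w i0)) = real (card W) / real p * (\<Sum>t\<in>{0..<int p}. H t)"
proof -
  have shift: "(\<Sum>w\<in>W. H (w i0)) = (\<Sum>w\<in>W. H ((w i0 + w0 i0 * j) mod int p))" for j
  proof -
    have "(\<Sum>w\<in>W. H (w i0)) = (\<Sum>w\<in>W. H ((vadd p (vscale p j w0) w) i0))"
      using sum_subspace_translate[OF W subspace_vscale[OF W w0], of "\<lambda>w. H (w i0)"] by simp
    then show ?thesis
      by (simp add: vadd_def vscale_def mod_simps algebra_simps)
  qed
  have "real p * (\<Sum>w\<in>W. H (w i0)) = (\<Sum>j\<in>{0..<int p}. \<Sum>w\<in>W. H ((w i0 + w0 i0 * j) mod int p))"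
    using shift by simp
  also have "\<dots> = (\<Sum>w\<in>W. \<Sum>j\<in>{0..<int p}. H ((w i0 + w0 i0 * j) mod int p))"
    by (rule sum.swap)
  also have "\<dots> = real (card W) * (\<Sum>t\<in>{0..<int p}. H t)"
    by (simp add: sum_Zp_affine[OF a])
  finally show ?thesis
    using p_gt1 by (simp add: field_simps)
qed

lemma vadd_apply: "vadd p x y i = (x i + y i) mod int p"
  unfolding vadd_def ..

lemma vscale_apply: "vscale p k x i = (k * x i) mod int p"
  unfolding vscale_def ..

lemma vadd_vscale_interchange:
  "vadd p (vadd p m (vscale p a w)) (vadd p d (vscale p b w)) = vadd p (vadd p m d) (vscale p (a + b) w)"
  "vadd p (vadd p m (vscale p a w)) (vadd p (vadd p d (vscale p b w)) (vadd p d (vscale p b w)))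
     = vadd p (vadd p m (vadd p d d)) (vscale p (a + 2 * b) w)"
  by (rule ext, simp only: vadd_def vscale_def, simp add: mod_simps, (simp add: algebra_simps)?)+

lemma vadd_interchange:
  "vadd p (vadd p m w1) (vadd p d w2) = vadd p (vadd p m d) (vadd p w1 w2)"
  "vadd p (vadd p m w1) (vadd p (vadd p d w2) (vadd p d w2))
     = vadd p (vadd p m (vadd p d d)) (vadd p w1 (vadd p w2 w2))"
  by (rule ext, simp only: vadd_def, simp add: mod_simps, (simp add: algebra_simps)?)+

end

locale perturbation = odd_prime_field +
  fixes n :: nat and W :: "(nat \<Rightarrow> int) set" and w0 :: "nat \<Rightarrow> int" and i0 :: nat
    and P :: "int \<Rightarrow> real"
  assumes W: "is_subspace p n W" and w0: "w0 \<in> W" and w0_i0: "w0 i0 mod int p \<noteq> 0"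
    and P: "periodic_mod_p P" and sum_P: "(\<Sum>t\<in>{0..<int p}. P t) = 0"
begin

lemma sum_P_coordinate:
  assumes "k mod int p \<noteq> 0"
  shows "(\<Sum>w\<in>W. P (z + k * w i0)) = 0"
  using sum_subspace_coordinate[OF W w0 w0_i0, of "\<lambda>t. P (z + k * t)"]
  by (simp add: sum_Zp_periodic_affine[OF P assms] sum_P)

text \<open>Averaging over the translates of (m, d) by (a w, b w), w in W, kills any double
  sum whose terms pick up a factor P varying with the coordinate i0 of w.\<close>

lemma sum_pairs_vanish:
  assumes G: "\<And>m d w. m \<in> vecs p n \<Longrightarrow> d \<in> vecs p n \<Longrightarrow> w \<in> W \<Longrightarrow>
      G (vadd p m (vscale p a w)) (vadd p d (vscale p b w)) = R m d * P (Z m d + k * w i0)"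
    and k: "k mod int p \<noteq> 0"
  shows "(\<Sum>m\<in>vecs p n. \<Sum>d\<in>vecs p n. G m d) = 0"
proof -
  have "real (card W) * (\<Sum>m\<in>vecs p n. \<Sum>d\<in>vecs p n. G m d)
      = (\<Sum>w\<in>W. \<Sum>m\<in>vecs p n. \<Sum>d\<in>vecs p n. G m d)"
    by simp
  also have "\<dots> = (\<Sum>w\<in>W. \<Sum>m\<in>vecs p n. \<Sum>d\<in>vecs p n. G (vadd p m (vscale p a w)) (vadd p d (vscale p b w)))"
  proof (rule sum.cong[OF refl])
    fix w assume "w \<in> W"
    then have "vscale p a w \<in> vecs p n" "vscale p b w \<in> vecs p n"
      using subspace_vecs[OF W] by simp_all
    then show "(\<Sum>m\<in>vecs p n. \<Sum>d\<in>vecs p n. G m d)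
        = (\<Sum>m\<in>vecs p n. \<Sum>d\<in>vecs p n. G (vadd p m (vscale p a w)) (vadd p d (vscale p b w)))"
      by (rule sum_pairs_translate)
  qed
  also have "\<dots> = (\<Sum>w\<in>W. \<Sum>m\<in>vecs p n. \<Sum>d\<in>vecs p n. R m d * P (Z m d + k * w i0))"
    by (intro sum.cong refl) (simp add: G)
  also have "\<dots> = (\<Sum>m\<in>vecs p n. \<Sum>d\<in>vecs p n. R m d * (\<Sum>w\<in>W. P (Z m d + k * w i0)))"
    by (subst sum.swap, subst sum.swap) (simp add: sum_distrib_left)
  also have "\<dots> = 0"
    by (simp add: sum_P_coordinate[OF k])
  finally show ?thesis
    using card_subspace_pos[OF W] by simp
qed

lemma sum_modulated:
  assumes "translation_invariant n W c"
  shows "(\<Sum>x\<in>vecs p n. c x * P (x i0)) = 0"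
proof -
  have "(\<Sum>m\<in>vecs p n. \<Sum>d\<in>vecs p n. c m * P (m i0)) = 0"
    by (rule sum_pairs_vanish[where a = 1 and b = 0 and k = 1 and R = "\<lambda>m d. c m" and Z = "\<lambda>m d. m i0"])
      (use p_gt1 in \<open>simp_all del: vscale_one add: vadd_apply vscale_apply mod_simps
        periodic_mod_pD[OF P] translation_invariant_vscale[OF assms W]\<close>)
  then show ?thesis
    using p_gt1 by (simp add: card_vecs sum_distrib_left[symmetric])
qed

lemma sum_subspace_pairs_coordinate:
  "(\<Sum>w1\<in>W. \<Sum>w2\<in>W. H (w1 i0) (w2 i0))
     = (real (card W) / real p) ^ 2 * (\<Sum>s\<in>{0..<int p}. \<Sum>t\<in>{0..<int p}. H s t)"
proof -
  have "(\<Sum>w1\<in>W. \<Sum>w2\<in>W. H (w1 i0) (w2 i0))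
      = real (card W) / real p * (\<Sum>w1\<in>W. (\<lambda>s. \<Sum>t\<in>{0..<int p}. H s t) (w1 i0))"
    by (simp add: sum_subspace_coordinate[OF W w0 w0_i0] sum_distrib_left)
  also have "\<dots> = real (card W) / real p * (real (card W) / real p * (\<Sum>s\<in>{0..<int p}. \<Sum>t\<in>{0..<int p}. H s t))"
    using sum_subspace_coordinate[OF W w0 w0_i0, of "\<lambda>s. \<Sum>t\<in>{0..<int p}. H s t"] by simp
  finally show ?thesis
    by (simp add: power2_eq_square)
qed

text \<open>Translating (m, d) by (w1, w2) with w1, w2 in W fixes the factors c and turns the
  three factors P into a progression count over the integers modulo p, shifted
  by the progression m, m + d, m + 2 d in coordinate i0.\<close>

lemma trilinear_modulated:
  assumes c: "translation_invariant n W c"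
  defines "cP \<equiv> \<lambda>x. c x * P (x i0)"
  shows "trilinear n cP cP cP = Lambda3_Zp P * trilinear n c c c"
proof -
  define K where "K = real (card W)"
  have K0: "K > 0"
    unfolding K_def using card_subspace_pos[OF W] by simp
  define G where "G = (\<lambda>m d. cP m * cP (vadd p m d) * cP (vadd p m (vadd p d d)))"
  define C where "C = (\<lambda>m d. c m * c (vadd p m d) * c (vadd p m (vadd p d d)))"
  define H where "H = (\<lambda>m d s t. P (s + m i0) * P (s + ((m i0 + d i0) + t))
      * P (s + ((m i0 + (d i0 + d i0)) + 2 * t)))"
  have G_shift: "G (vadd p m w1) (vadd p d w2) = C m d * H m d (w1 i0) (w2 i0)"
    if m: "m \<in> vecs p n" and d: "d \<in> vecs p n" and w1: "w1 \<in> W" and w2: "w2 \<in> W" for m d w1 w2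
  proof -
    have "vadd p w1 w2 \<in> W" "vadd p w1 (vadd p w2 w2) \<in> W"
      using W w1 w2 by (auto intro: subspace_vadd)
    then have "c (vadd p m w1) = c m"
      "c (vadd p (vadd p m w1) (vadd p d w2)) = c (vadd p m d)"
      "c (vadd p (vadd p m w1) (vadd p (vadd p d w2) (vadd p d w2))) = c (vadd p m (vadd p d d))"
      using c m d w1 unfolding translation_invariant_def
      by (simp, simp only: vadd_interchange(1), simp, simp only: vadd_interchange(2), simp)
    moreover have "P (vadd p m w1 i0) = P (w1 i0 + m i0)"
      "P (vadd p (vadd p m w1) (vadd p d w2) i0) = P (w1 i0 + ((m i0 + d i0) + w2 i0))"
      "P (vadd p (vadd p m w1) (vadd p (vadd p d w2) (vadd p d w2)) i0)
         = P (w1 i0 + ((m i0 + (d i0 + d i0)) + 2 * w2 i0))"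
      by (simp_all add: vadd_apply mod_simps periodic_mod_pD[OF P]) (simp_all add: algebra_simps)
    ultimately show ?thesis
      unfolding G_def C_def H_def cP_def by (simp add: mult_ac)
  qed
  have H_sum: "(\<Sum>s\<in>{0..<int p}. \<Sum>t\<in>{0..<int p}. H m d s t) = real p ^ 2 * Lambda3_Zp P" for m d
    unfolding H_def Lambda3_Zp_def using sum_Zp_ap3_translate[OF P] p_gt1 by simp
  have "K * K * (\<Sum>m\<in>vecs p n. \<Sum>d\<in>vecs p n. G m d)
      = (\<Sum>w1\<in>W. \<Sum>w2\<in>W. \<Sum>m\<in>vecs p n. \<Sum>d\<in>vecs p n. G m d)"
    unfolding K_def by simp
  also have "\<dots> = (\<Sum>w1\<in>W. \<Sum>w2\<in>W. \<Sum>m\<in>vecs p n. \<Sum>d\<in>vecs p n. G (vadd p m w1) (vadd p d w2))"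
    by (rule sum.cong[OF refl], rule sum.cong[OF refl], rule sum_pairs_translate)
      (auto intro: subspace_vecs[OF W])
  also have "\<dots> = (\<Sum>w1\<in>W. \<Sum>w2\<in>W. \<Sum>m\<in>vecs p n. \<Sum>d\<in>vecs p n. C m d * H m d (w1 i0) (w2 i0))"
    by (intro sum.cong refl) (simp add: G_shift)
  also have "\<dots> = (\<Sum>m\<in>vecs p n. \<Sum>d\<in>vecs p n. C m d * (\<Sum>w1\<in>W. \<Sum>w2\<in>W. H m d (w1 i0) (w2 i0)))"
    by (subst sum_swap_pairs) (simp add: sum_distrib_left)
  also have "\<dots> = K * K * (Lambda3_Zp P * (\<Sum>m\<in>vecs p n. \<Sum>d\<in>vecs p n. C m d))"
    unfolding sum_subspace_pairs_coordinate H_sum K_def using p_gt1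
    by (simp add: sum_distrib_left sum_distrib_right power2_eq_square field_simps)
  finally show ?thesis
    using K0 unfolding trilinear_def G_def C_def by simp
qed

text \<open>Each mixed term is killed by a shift (m, d) to (m + a w, d + b w) fixing all factors
  but one factor P, whose argument then moves by k times w i0 for a unit k.\<close>

lemma trilinear_cross_terms:
  assumes u: "translation_invariant n W u" and c: "translation_invariant n W c"
  defines "cP \<equiv> \<lambda>x. c x * P (x i0)"
  shows "trilinear n cP u u = 0" "trilinear n u cP u = 0" "trilinear n u u cP = 0"
    "trilinear n cP cP u = 0" "trilinear n cP u cP = 0" "trilinear n u cP cP = 0"
  unfolding trilinear_def cP_def
  using translation_invariant_vscale[OF u W] translation_invariant_vscale[OF c W]
proof -
  note shift_simps = vadd_vscale_interchange vadd_apply vscale_apply mod_simps periodic_mod_pD[OF P]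
    translation_invariant_vscale[OF u W] translation_invariant_vscale[OF c W]
  show "(\<Sum>m\<in>vecs p n. \<Sum>d\<in>vecs p n. c m * P (m i0) * u (vadd p m d) * u (vadd p m (vadd p d d))) = 0"
    by (rule sum_pairs_vanish[where a = 1 and b = 0 and k = 1
          and R = "\<lambda>m d. c m * u (vadd p m d) * u (vadd p m (vadd p d d))" and Z = "\<lambda>m d. m i0"])
      (use p_gt1 in \<open>simp_all del: vscale_one add: shift_simps mult_ac\<close>)
  show "(\<Sum>m\<in>vecs p n. \<Sum>d\<in>vecs p n. u m * (c (vadd p m d) * P (vadd p m d i0)) * u (vadd p m (vadd p d d))) = 0"
    by (rule sum_pairs_vanish[where a = 1 and b = 0 and k = 1
          and R = "\<lambda>m d. u m * c (vadd p m d) * u (vadd p m (vadd p d d))" and Z = "\<lambda>m d. m i0 + d i0"])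
      (use p_gt1 in \<open>simp_all del: vscale_one add: shift_simps mult_ac\<close>)
  show "(\<Sum>m\<in>vecs p n. \<Sum>d\<in>vecs p n. u m * u (vadd p m d) * (c (vadd p m (vadd p d d)) * P (vadd p m (vadd p d d) i0))) = 0"
    by (rule sum_pairs_vanish[where a = 1 and b = 0 and k = 1
          and R = "\<lambda>m d. u m * u (vadd p m d) * c (vadd p m (vadd p d d))" and Z = "\<lambda>m d. m i0 + (d i0 + d i0)"])
      (use p_gt1 in \<open>simp_all del: vscale_one add: shift_simps mult_ac\<close>)
  show "(\<Sum>m\<in>vecs p n. \<Sum>d\<in>vecs p n. c m * P (m i0) * (c (vadd p m d) * P (vadd p m d i0)) * u (vadd p m (vadd p d d))) = 0"
    by (rule sum_pairs_vanish[where a = 1 and b = "-1" and k = 1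
          and R = "\<lambda>m d. c m * c (vadd p m d) * P (m i0 + d i0) * u (vadd p m (vadd p d d))" and Z = "\<lambda>m d. m i0"])
      (use p_gt1 in \<open>simp_all del: vscale_one add: shift_simps mult_ac\<close>)
  show "(\<Sum>m\<in>vecs p n. \<Sum>d\<in>vecs p n. c m * P (m i0) * u (vadd p m d) * (c (vadd p m (vadd p d d)) * P (vadd p m (vadd p d d) i0))) = 0"
    by (rule sum_pairs_vanish[where a = "-2" and b = 1 and k = "-2"
          and R = "\<lambda>m d. c m * u (vadd p m d) * c (vadd p m (vadd p d d)) * P (m i0 + (d i0 + d i0))" and Z = "\<lambda>m d. m i0"])
      (use minus_two_mod_p in \<open>simp_all del: vscale_one add: shift_simps mult_ac\<close>)
  show "(\<Sum>m\<in>vecs p n. \<Sum>d\<in>vecs p n. u m * (c (vadd p m d) * P (vadd p m d i0)) * (c (vadd p m (vadd p d d)) * P (vadd p m (vadd p d d) i0))) = 0"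
    by (rule sum_pairs_vanish[where a = "-2" and b = 1 and k = "-1"
          and R = "\<lambda>m d. u m * c (vadd p m d) * c (vadd p m (vadd p d d)) * P (m i0 + (d i0 + d i0))" and Z = "\<lambda>m d. m i0 + d i0"])
      (use minus_one_mod_p in \<open>simp_all del: vscale_one add: shift_simps mult_ac\<close>)
qed

theorem Lambda3_perturbation:
  assumes u: "translation_invariant n W u" and c: "translation_invariant n W c"
  shows "Lambda3 p n (\<lambda>x. u x + c x * P (x i0)) = Lambda3 p n u + Lambda3_Zp P * Lambda3 p n c"
proof -
  define cP where "cP = (\<lambda>x. c x * P (x i0))"
  have "trilinear n (\<lambda>x. u x + cP x) (\<lambda>x. u x + cP x) (\<lambda>x. u x + cP x)
      = trilinear n u u u + trilinear n u u cP + trilinear n u cP u + trilinear n u cP cP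
        + trilinear n cP u u + trilinear n cP u cP + trilinear n cP cP u + trilinear n cP cP cP"
    by (simp only: trilinear_add add.assoc)
  also have "\<dots> = trilinear n u u u + Lambda3_Zp P * trilinear n c c c"
    using trilinear_cross_terms[OF u c] trilinear_modulated[OF c] unfolding cP_def by simp
  finally show ?thesis
    unfolding Lambda3_eq_trilinear cP_def by (simp add: add_divide_distrib)
qed

end

section \<open>Supersaturation: a Varnavides-type count from Meshulam's theorem\<close>

context prime_field
begin

text \<open>The entry (i, j) of the n \<times> k matrix M is stored at index j * n + i.\<close>

definition linmap :: "nat \<Rightarrow> nat \<Rightarrow> (nat \<Rightarrow> int) \<Rightarrow> (nat \<Rightarrow> int) \<Rightarrow> (nat \<Rightarrow> int)" where
  "linmap n k M x = (\<lambda>i. if i < n then (\<Sum>j<k. x j * M (j * n + i)) mod int p else 0)"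

lemma linmap_vecs [simp]: "linmap n k M x \<in> vecs p n"
  unfolding linmap_def vecs_def using p_pos by auto

lemma sum_mult_mod_add:
  "(\<Sum>j<k. x j * ((a j + b j) mod int p)) mod int p
     = ((\<Sum>j<k. x j * a j) mod int p + (\<Sum>j<k. x j * b j) mod int p) mod int p"
proof -
  have "(\<Sum>j<k. x j * ((a j + b j) mod int p)) mod int p
      = (\<Sum>j<k. (x j * ((a j + b j) mod int p)) mod int p) mod int p"
    by (simp add: mod_sum_eq)
  also have "\<dots> = (\<Sum>j<k. x j * (a j + b j)) mod int p"
    by (simp add: mod_mult_right_eq mod_sum_eq)
  also have "\<dots> = ((\<Sum>j<k. x j * a j) + (\<Sum>j<k. x j * b j)) mod int p"
    by (simp add: distrib_left sum.distrib)
  finally show ?thesis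
    by (simp add: mod_simps)
qed

lemma linmap_vadd_matrix: "linmap n k (vadd p M0 M) y = vadd p (linmap n k M0 y) (linmap n k M y)"
proof
  fix i
  show "linmap n k (vadd p M0 M) y i = vadd p (linmap n k M0 y) (linmap n k M y) i"
    unfolding linmap_def vadd_def using sum_mult_mod_add[of y "\<lambda>j. M0 (j * n + i)" "\<lambda>j. M (j * n + i)" k]
    by simp
qed

lemma linmap_vadd: "linmap n k M (vadd p x y) = vadd p (linmap n k M x) (linmap n k M y)"
proof
  fix i
  have "(\<Sum>j<k. (x j + y j) mod int p * M (j * n + i)) mod int p
      = ((\<Sum>j<k. x j * M (j * n + i)) mod int p + (\<Sum>j<k. y j * M (j * n + i)) mod int p) mod int p"
    using sum_mult_mod_add[of "\<lambda>j. M (j * n + i)" x y k] by (simp add: mult.commute)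
  then show "linmap n k M (vadd p x y) i = vadd p (linmap n k M x) (linmap n k M y) i"
    unfolding linmap_def vadd_def by simp
qed

lemma linmap_onto:
  assumes y: "y \<in> vecs p k" "y \<noteq> vzero" and d: "d \<in> vecs p n"
  obtains M where "M \<in> vecs p (n * k)" "linmap n k M y = d"
proof -
  obtain j0 where j0: "j0 < k" "y j0 \<noteq> 0"
    using vecs_eq_vzero_iff[OF y(1)] y(2) by blast
  then have "y j0 mod int p \<noteq> 0"
    using vecs_mod[OF y(1), of j0] by simp
  then obtain r where r: "(r * y j0) mod int p = 1"
    using inverse_mod_p by blast
  define M where "M = (\<lambda>idx. if idx < n * k \<and> idx div n = j0 then (r * d (idx mod n)) mod int p else 0)"
  have "M \<in> vecs p (n * k)"
    unfolding M_def vecs_def using p_pos by auto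
  moreover have "linmap n k M y = d"
  proof
    fix i show "linmap n k M y i = d i"
    proof (cases "i < n")
      case True
      have idx: "j * n + i < n * k \<and> (j * n + i) div n = j \<and> (j * n + i) mod n = i" if "j < k" for j
      proof -
        have "j * n + i < (j + 1) * n"
          using True by simp
        also have "\<dots> \<le> k * n"
          using that by (intro mult_right_mono) auto
        finally show ?thesis
          using True by (simp add: mult.commute)
      qed
      have "(\<Sum>j<k. y j * M (j * n + i)) = (\<Sum>j<k. if j = j0 then y j0 * ((r * d i) mod int p) else 0)"
        by (intro sum.cong refl) (use True in \<open>auto simp: M_def idx\<close>)
      then have "linmap n k M y i = (y j0 * ((r * d i) mod int p)) mod int p"
        unfolding linmap_def using True j0(1) by simp
      also have "\<dots> = (((r * y j0) mod int p) * d i) mod int p"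
        by (simp add: mod_simps mult_ac)
      also have "\<dots> = d i"
        using r vecs_mod[OF d] by simp
      finally show ?thesis .
    qed (simp add: linmap_def vecs_out[OF d])
  qed
  ultimately show ?thesis
    using that by blast
qed

text \<open>Translating M by a matrix sending y to d0 translates M y by d0.\<close>

lemma sum_linmap_matrices:
  assumes y: "y \<in> vecs p k" "y \<noteq> vzero"
  shows "(\<Sum>M\<in>vecs p (n * k). H (linmap n k M y)) = real (p ^ (n * k)) / real (p ^ n) * (\<Sum>d\<in>vecs p n. H d)"
proof -
  have shift: "(\<Sum>M\<in>vecs p (n * k). H (linmap n k M y)) = (\<Sum>M\<in>vecs p (n * k). H (vadd p d0 (linmap n k M y)))"
    if d0: "d0 \<in> vecs p n" for d0
  proof -
    obtain M0 where M0: "M0 \<in> vecs p (n * k)" "linmap n k M0 y = d0"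
      using linmap_onto[OF y d0] by blast
    show ?thesis
      using sum_vecs_translate[OF M0(1), of "\<lambda>M. H (linmap n k M y)"] by (simp add: linmap_vadd_matrix M0(2))
  qed
  have "real (p ^ n) * (\<Sum>M\<in>vecs p (n * k). H (linmap n k M y))
      = (\<Sum>d0\<in>vecs p n. \<Sum>M\<in>vecs p (n * k). H (linmap n k M y))"
    by (simp add: card_vecs)
  also have "\<dots> = (\<Sum>d0\<in>vecs p n. \<Sum>M\<in>vecs p (n * k). H (vadd p d0 (linmap n k M y)))"
    by (rule sum.cong[OF refl]) (rule shift)
  also have "\<dots> = (\<Sum>M\<in>vecs p (n * k). \<Sum>d\<in>vecs p n. H d)"
    by (subst sum.swap) (simp add: sum_vecs_translate'[OF linmap_vecs])
  also have "\<dots> = real (p ^ (n * k)) * (\<Sum>d\<in>vecs p n. H d)"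
    by (simp add: card_vecs)
  finally show ?thesis
    using p_gt1 by (simp add: field_simps)
qed

definition nontrivial_ap3_count :: "nat \<Rightarrow> (nat \<Rightarrow> int) set \<Rightarrow> real" where
  "nontrivial_ap3_count k T = (\<Sum>x\<in>vecs p k. \<Sum>y\<in>vecs p k - {vzero}.
     indicator T x * indicator T (vadd p x y) * indicator T (vadd p x (vadd p y y)))"

text \<open>Induction on card T, removing a point of a progression given by Meshulam's theorem.\<close>

lemma nontrivial_ap3_count_ge:
  assumes mc: "meshulam_const p c" and k: "k \<ge> 1" and T: "T \<subseteq> vecs p k"
  shows "nontrivial_ap3_count k T \<ge> real (card T) - c * real p ^ k / real k"
  using T
proof (induction "card T" arbitrary: T rule: less_induct)
  case less
  show ?case
  proof (cases "real (card T) \<ge> c * real p ^ k / real k")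
    case False
    have "nontrivial_ap3_count k T \<ge> 0"
      unfolding nontrivial_ap3_count_def by (intro sum_nonneg) simp
    then show ?thesis
      using False by simp
  next
    case True
    obtain a d where a: "a \<in> T" and d: "d \<in> vecs p k" "d \<noteq> vzero"
      and ad: "vadd p a d \<in> T" "vadd p a (vadd p d d) \<in> T"
      using mc k less.prems True unfolding meshulam_const_def by blast
    define T' where "T' = T - {a}"
    have fin: "finite T"
      using finite_subset[OF less.prems finite_vecs] .
    have card_T': "card T' = card T - 1" "card T \<ge> 1"
      unfolding T'_def using a fin by (auto simp: Suc_le_eq card_gt_0_iff)
    have IH: "nontrivial_ap3_count k T' \<ge> real (card T') - c * real p ^ k / real k"
      by (rule less.hyps) (use card_T' less.prems in \<open>auto simp: T'_def\<close>)
    define F where "F = (\<lambda>S x y. indicator S x * indicator S (vadd p x y) * indicator S (vadd p x (vadd p y y)) :: real)"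
    have mono: "F T' x y \<le> F T x y" for x y
      unfolding F_def T'_def by (simp add: indicator_def)
    have "1 = F T a d - F T' a d"
      unfolding F_def T'_def using a ad by simp
    also have "\<dots> \<le> (\<Sum>y\<in>vecs p k - {vzero}. F T a y - F T' a y)"
      by (rule member_le_sum) (use d mono in auto)
    also have "\<dots> \<le> (\<Sum>x\<in>vecs p k. \<Sum>y\<in>vecs p k - {vzero}. F T x y - F T' x y)"
      by (rule member_le_sum) (use a less.prems mono in \<open>auto intro!: sum_nonneg\<close>)
    also have "\<dots> = nontrivial_ap3_count k T - nontrivial_ap3_count k T'"
      unfolding nontrivial_ap3_count_def F_def by (simp add: sum_subtractf)
    finally show ?thesis
      using IH card_T' by (simp add: of_nat_diff)
  qed
qed

lemma Lambda3_nonneg: "(\<And>x. x \<in> vecs p n \<Longrightarrow> f x \<ge> 0) \<Longrightarrow> Lambda3 p n f \<ge> 0"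
  unfolding Lambda3_def using p_gt1 by (intro divide_nonneg_pos sum_nonneg mult_nonneg_nonneg) auto

definition affine_preimage ::
  "nat \<Rightarrow> nat \<Rightarrow> (nat \<Rightarrow> int) set \<Rightarrow> (nat \<Rightarrow> int) \<Rightarrow> (nat \<Rightarrow> int) \<Rightarrow> (nat \<Rightarrow> int) set" where
  "affine_preimage n k S a M = {x \<in> vecs p k. vadd p a (linmap n k M x) \<in> S}"

lemma sum_card_affine_preimage:
  assumes S: "S \<subseteq> vecs p n"
  shows "(\<Sum>a\<in>vecs p n. \<Sum>M\<in>vecs p (n * k). real (card (affine_preimage n k S a M)))
    = real p ^ k * real (p ^ (n * k)) * real (card S)"
proof -
  have "real (card (affine_preimage n k S a M)) = (\<Sum>x\<in>vecs p k. indicator S (vadd p a (linmap n k M x)))"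
    for a M
    unfolding affine_preimage_def by (simp add: indicator_def of_bool_def sum.If_cases Int_def)
  then have "(\<Sum>a\<in>vecs p n. \<Sum>M\<in>vecs p (n * k). real (card (affine_preimage n k S a M)))
      = (\<Sum>a\<in>vecs p n. \<Sum>M\<in>vecs p (n * k). \<Sum>x\<in>vecs p k. indicator S (vadd p a (linmap n k M x)))"
    by simp
  also have "\<dots> = (\<Sum>x\<in>vecs p k. \<Sum>M\<in>vecs p (n * k). \<Sum>a\<in>vecs p n. indicator S (vadd p a (linmap n k M x)))"
    by (rule sum_reverse3)
  also have "\<dots> = (\<Sum>x\<in>vecs p k. \<Sum>M\<in>vecs p (n * k). real (card S))"
    using S by (simp add: sum_vecs_translate'[OF linmap_vecs] sum_indicator_subset)
  finally show ?thesis
    by (simp add: card_vecs)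
qed

text \<open>Every progression of S with nonzero difference is the image of equally many
  progressions with nonzero difference.\<close>

lemma sum_nontrivial_ap3_count_affine_preimage:
  "(\<Sum>a\<in>vecs p n. \<Sum>M\<in>vecs p (n * k). nontrivial_ap3_count k (affine_preimage n k S a M))
    = real p ^ k * (real p ^ k - 1) * real (p ^ (n * k)) * real (p ^ n) * Lambda3 p n (indicator S)"
proof -
  define N where "N = real (p ^ n)"
  define Q where "Q = real (p ^ (n * k))"
  define Y where "Y = vecs p k - {vzero}"
  define G where "G = (\<lambda>m d. indicator S m * indicator S (vadd p m d) * indicator S (vadd p m (vadd p d d)) :: real)"
  have sum_G: "(\<Sum>m\<in>vecs p n. \<Sum>d\<in>vecs p n. G m d) = N * N * Lambda3 p n (indicator S)"
    unfolding Lambda3_def G_def N_def using p_gt1 by (simp add: power_mult power2_eq_square power_mult_distrib)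
  have count: "nontrivial_ap3_count k (affine_preimage n k S a M)
      = (\<Sum>x\<in>vecs p k. \<Sum>y\<in>Y. G (vadd p a (linmap n k M x)) (linmap n k M y))" for a M
    unfolding nontrivial_ap3_count_def Y_def
  proof (intro sum.cong refl)
    fix x y assume "x \<in> vecs p k" "y \<in> vecs p k - {vzero}"
    then show "indicator (affine_preimage n k S a M) x * indicator (affine_preimage n k S a M) (vadd p x y)
        * indicator (affine_preimage n k S a M) (vadd p x (vadd p y y))
        = G (vadd p a (linmap n k M x)) (linmap n k M y)"
      unfolding G_def affine_preimage_def by (simp add: indicator_def linmap_vadd vadd_assoc)
  qed
  have inner: "(\<Sum>a\<in>vecs p n. \<Sum>M\<in>vecs p (n * k). G (vadd p a (linmap n k M x)) (linmap n k M y))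
      = Q / N * (N * N * Lambda3 p n (indicator S))" if y: "y \<in> Y" for x y
  proof -
    have "(\<Sum>a\<in>vecs p n. \<Sum>M\<in>vecs p (n * k). G (vadd p a (linmap n k M x)) (linmap n k M y))
        = (\<Sum>M\<in>vecs p (n * k). \<Sum>m\<in>vecs p n. G m (linmap n k M y))"
      by (subst sum.swap) (rule sum.cong[OF refl], rule sum_vecs_translate'[OF linmap_vecs])
    also have "\<dots> = Q / N * (\<Sum>d\<in>vecs p n. \<Sum>m\<in>vecs p n. G m d)"
      unfolding Q_def N_def by (rule sum_linmap_matrices) (use y in \<open>auto simp: Y_def\<close>)
    finally show ?thesis
      by (subst (asm) sum.swap) (simp add: sum_G)
  qed
  have "(\<Sum>a\<in>vecs p n. \<Sum>M\<in>vecs p (n * k). nontrivial_ap3_count k (affine_preimage n k S a M))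
      = (\<Sum>x\<in>vecs p k. \<Sum>y\<in>Y. \<Sum>a\<in>vecs p n. \<Sum>M\<in>vecs p (n * k). G (vadd p a (linmap n k M x)) (linmap n k M y))"
    unfolding count by (rule sum_swap_pairs)
  also have "\<dots> = real (card (vecs p k)) * real (card Y) * (Q / N * (N * N * Lambda3 p n (indicator S)))"
    by (simp add: inner)
  also have "real (card Y) = real p ^ k - 1"
    unfolding Y_def using p_gt1 by (simp add: card_Diff_singleton card_vecs of_nat_diff)
  finally show ?thesis
    unfolding N_def Q_def using p_gt1 by (simp add: card_vecs)
qed

text \<open>Average the preceding bound over the affine maps x \<mapsto> a + M x from vectors of
  length k to vectors of length n.\<close>

theorem varnavides:
  assumes mc: "meshulam_const p c" and k: "k \<ge> 1" and S: "S \<subseteq> vecs p n"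
  shows "Lambda3 p n (indicator S) \<ge> (real (card S) / real p ^ n - c / real k) / real p ^ k"
proof -
  define N where "N = real (p ^ n)"
  define Q where "Q = real (p ^ (n * k))"
  define Lam where "Lam = Lambda3 p n (indicator S)"
  have N0: "N > 0" and Q0: "Q > 0" and pk: "real p ^ k > 0"
    unfolding N_def Q_def using p_gt1 by simp_all
  have "(\<Sum>a\<in>vecs p n. \<Sum>M\<in>vecs p (n * k). real (card (affine_preimage n k S a M)) - c * real p ^ k / real k)
      \<le> (\<Sum>a\<in>vecs p n. \<Sum>M\<in>vecs p (n * k). nontrivial_ap3_count k (affine_preimage n k S a M))"
    by (intro sum_mono nontrivial_ap3_count_ge[OF mc k]) (auto simp: affine_preimage_def)
  then have "real p ^ k * Q * real (card S) - N * Q * (c * real p ^ k / real k)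
      \<le> (real p ^ k * (real p ^ k - 1)) * (Q * N * Lam)"
    unfolding sum_subtractf sum_card_affine_preimage[OF S] sum_nontrivial_ap3_count_affine_preimage
    unfolding N_def Q_def Lam_def by (simp add: card_vecs mult_ac)
  moreover have "(real (card S) / N - c / real k) * (real p ^ k * Q * N)
      = real p ^ k * Q * real (card S) - N * Q * (c * real p ^ k / real k)"
    using N0 by (simp add: field_simps)
  ultimately have "(real (card S) / N - c / real k) * (real p ^ k * Q * N)
      \<le> ((real p ^ k - 1) * Lam) * (real p ^ k * Q * N)"
    by (simp add: mult_ac)
  then have "real (card S) / N - c / real k \<le> (real p ^ k - 1) * Lam"
    using pk Q0 N0 by (simp add: mult_le_cancel_right)
  also have "\<dots> \<le> real p ^ k * Lam"
    using Lambda3_nonneg[of n "indicator S"] unfolding Lam_def by (simp add: algebra_simps)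
  finally show ?thesis
    unfolding Lam_def N_def using pk by (simp add: field_simps)
qed

end

section \<open>The energy decrement\<close>

context prime_field
begin

lemma favg_bounds:
  assumes W: "is_subspace p n W" and f01: "\<forall>x\<in>vecs p n. 0 \<le> f x \<and> f x \<le> 1"
    and x: "x \<in> vecs p n"
  shows "0 \<le> favg p W f x \<and> favg p W f x \<le> 1"
proof -
  have f01': "0 \<le> f (vadd p x w) \<and> f (vadd p x w) \<le> 1" if "w \<in> W" for w
    using f01 x subspace_vecs[OF W that] by simp
  have "0 \<le> (\<Sum>w\<in>W. f (vadd p x w))"
    by (rule sum_nonneg) (use f01' in blast)
  moreover have "(\<Sum>w\<in>W. f (vadd p x w)) \<le> (\<Sum>w\<in>W. 1)"
    by (rule sum_mono) (use f01' in blast)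
  ultimately show ?thesis
    unfolding favg_def using card_subspace_pos[OF W] by (simp add: divide_le_eq_1)
qed

lemma sum_mult_favg:
  assumes W: "is_subspace p n W" and v: "translation_invariant n W v"
  shows "(\<Sum>x\<in>vecs p n. v x * favg p W f x) = (\<Sum>x\<in>vecs p n. v x * f x)"
proof -
  define K where "K = real (card W)"
  have K0: "K > 0"
    unfolding K_def using card_subspace_pos[OF W] by simp
  have "K * (\<Sum>x\<in>vecs p n. v x * favg p W f x) = (\<Sum>w\<in>W. \<Sum>x\<in>vecs p n. v x * f (vadd p x w))"
    unfolding favg_def K_def using K0[unfolded K_def]
    by (subst sum.swap) (simp add: sum_distrib_left sum_divide_distrib)
  also have "\<dots> = (\<Sum>w\<in>W. \<Sum>x\<in>vecs p n. v x * f x)"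
  proof (rule sum.cong[OF refl])
    fix w assume w: "w \<in> W"
    have "(\<Sum>x\<in>vecs p n. v x * f (vadd p x w)) = (\<Sum>x\<in>vecs p n. v (vadd p x w) * f (vadd p x w))"
      using v w unfolding translation_invariant_def by simp
    also have "\<dots> = (\<Sum>x\<in>vecs p n. v x * f x)"
      by (rule sum_vecs_translate'[OF subspace_vecs[OF W w]])
    finally show "(\<Sum>x\<in>vecs p n. v x * f (vadd p x w)) = (\<Sum>x\<in>vecs p n. v x * f x)" .
  qed
  also have "\<dots> = K * (\<Sum>x\<in>vecs p n. v x * f x)"
    unfolding K_def by simp
  finally show ?thesis
    using K0 by simp
qed

lemma sum_favg:
  assumes "is_subspace p n W"
  shows "(\<Sum>x\<in>vecs p n. favg p W f x) = (\<Sum>x\<in>vecs p n. f x)"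
  using sum_mult_favg[OF assms, of "\<lambda>_. 1"] by (simp add: translation_invariant_def)

text \<open>Pointwise, the distance from f to u in [0, 1] is at most 2 (1 - u) f - (f - u);
  both terms on the right average against u as against f, by W-invariance of u.\<close>

lemma sum_abs_diff_favg_le:
  assumes W: "is_subspace p n W" and f01: "\<forall>x\<in>vecs p n. 0 \<le> f x \<and> f x \<le> 1"
  defines "u \<equiv> favg p W f"
  shows "(\<Sum>x\<in>vecs p n. \<bar>f x - u x\<bar>) \<le> 2 * (\<Sum>x\<in>vecs p n. u x * (1 - u x))"
proof -
  have u01: "0 \<le> u x \<and> u x \<le> 1" if "x \<in> vecs p n" for x
    unfolding u_def using favg_bounds[OF W f01 that] .
  have pointwise: "\<bar>f x - u x\<bar> \<le> 2 * ((1 - u x) * f x) - (f x - u x)" if x: "x \<in> vecs p n" for x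
    using u01[OF x] f01 x mult_nonneg_nonneg[of "u x" "1 - f x"] mult_nonneg_nonneg[of "1 - u x" "f x"]
    by (auto simp: abs_if algebra_simps)
  have "(\<Sum>x\<in>vecs p n. \<bar>f x - u x\<bar>) \<le> (\<Sum>x\<in>vecs p n. 2 * ((1 - u x) * f x) - (f x - u x))"
    by (rule sum_mono) (rule pointwise)
  also have "\<dots> = 2 * (\<Sum>x\<in>vecs p n. (1 - u x) * f x) - ((\<Sum>x\<in>vecs p n. f x) - (\<Sum>x\<in>vecs p n. u x))"
    by (simp add: sum_subtractf sum_distrib_left)
  also have "\<dots> = 2 * (\<Sum>x\<in>vecs p n. (1 - u x) * u x)"
    using sum_mult_favg[OF W, of "\<lambda>x. 1 - u x" f] sum_favg[OF W, of f]
      favg_translation_invariant[OF W, of f]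
    unfolding u_def by (simp add: translation_invariant_def)
  finally show ?thesis
    by (simp add: mult.commute)
qed

lemma expect_abs_diff_favg_le_half:
  assumes W: "is_subspace p n W" and f01: "\<forall>x\<in>vecs p n. 0 \<le> f x \<and> f x \<le> 1"
  shows "expect p n (\<lambda>x. \<bar>f x - favg p W f x\<bar>) \<le> 1 / 2"
proof -
  have quarter: "u * (1 - u) \<le> 1 / 4" for u :: real
    using zero_le_power2[of "u - 1 / 2"] by (simp add: power2_eq_square algebra_simps)
  have "(\<Sum>x\<in>vecs p n. \<bar>f x - favg p W f x\<bar>) \<le> 2 * (\<Sum>x\<in>vecs p n. favg p W f x * (1 - favg p W f x))"
    by (rule sum_abs_diff_favg_le[OF W f01])
  also have "\<dots> \<le> 2 * (\<Sum>x\<in>vecs p n. 1 / 4)"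
    by (intro mult_left_mono sum_mono quarter) simp
  finally show ?thesis
    unfolding expect_def using p_gt1 by (simp add: card_vecs field_simps)
qed

lemma favg_vzero: "x \<in> vecs p n \<Longrightarrow> favg p {vzero} f x = f x"
  unfolding favg_def by simp

lemma exists_nonzero_coordinate:
  assumes W: "is_subspace p n W" and nontrivial: "W \<noteq> {vzero}"
  obtains w0 i0 where "w0 \<in> W" "w0 i0 mod int p \<noteq> 0"
proof -
  obtain w0 where "w0 \<in> W" "w0 \<noteq> vzero"
    using nontrivial subspace_vzero[OF W] by blast
  moreover from this obtain i0 where "w0 i0 \<noteq> 0"
    unfolding vzero_def by (metis ext)
  ultimately show ?thesis
    using that vecs_mod[OF subspace_vecs[OF W]] by metis
qed

lemma Lambda3_mono:
  assumes "\<forall>x\<in>vecs p n. 0 \<le> g x \<and> g x \<le> h x"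
  shows "Lambda3 p n g \<le> Lambda3 p n h"
proof -
  have "0 \<le> h x" if "x \<in> vecs p n" for x
    using assms that by force
  then show ?thesis
    unfolding Lambda3_def using assms
    by (intro divide_right_mono sum_mono mult_mono) (auto intro!: mult_nonneg_nonneg)
qed

lemma Lambda3_cmult: "Lambda3 p n (\<lambda>x. a * g x) = a ^ 3 * Lambda3 p n g"
  unfolding Lambda3_def by (simp add: sum_distrib_left power3_eq_cube mult_ac)

text \<open>A nonnegative function is at least th times the indicator of its level set at th.\<close>

lemma Lambda3_ge_level_set:
  assumes mc: "meshulam_const p c" and k: "k \<ge> 1" and th: "th \<ge> 0"
    and h: "\<forall>x\<in>vecs p n. 0 \<le> h x"
  shows "Lambda3 p n h \<ge> th ^ 3 * ((real (card {x \<in> vecs p n. th \<le> h x}) / real p ^ n - c / real k) / real p ^ k)"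
proof -
  define S where "S = {x \<in> vecs p n. th \<le> h x}"
  have "th ^ 3 * ((real (card S) / real p ^ n - c / real k) / real p ^ k) \<le> th ^ 3 * Lambda3 p n (indicator S)"
    using varnavides[OF mc k, of S n] th by (intro mult_left_mono) (auto simp: S_def)
  also have "\<dots> = Lambda3 p n (\<lambda>x. th * indicator S x)"
    by (simp add: Lambda3_cmult)
  also have "\<dots> \<le> Lambda3 p n h"
    using th h by (intro Lambda3_mono) (auto simp: S_def indicator_def)
  finally show ?thesis
    unfolding S_def .
qed

text \<open>The distance from f to u is controlled by u (1 - u) \<le> min(u, 1 - u).\<close>

lemma card_far_from_boolean_gt:
  assumes W: "is_subspace p n W" and f01: "\<forall>x\<in>vecs p n. 0 \<le> f x \<and> f x \<le> 1"
    and eps: "0 \<le> eps" and far: "expect p n (\<lambda>x. \<bar>f x - favg p W f x\<bar>) > eps"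
  defines "u \<equiv> favg p W f"
  shows "real (card {x \<in> vecs p n. eps / 4 \<le> min (u x) (1 - u x)}) > eps / 2 * real p ^ n"
proof -
  define S where "S = {x \<in> vecs p n. eps / 4 \<le> min (u x) (1 - u x)}"
  define N where "N = real p ^ n"
  have "eps * N < (\<Sum>x\<in>vecs p n. \<bar>f x - u x\<bar>)"
    using far p_gt1 unfolding expect_def N_def u_def by (simp add: field_simps)
  also have "\<dots> \<le> 2 * (\<Sum>x\<in>vecs p n. u x * (1 - u x))"
    unfolding u_def by (rule sum_abs_diff_favg_le[OF W f01])
  also have "\<dots> \<le> 2 * (\<Sum>x\<in>vecs p n. 1 / 2 * indicator S x + eps / 4)"
  proof (intro mult_left_mono sum_mono)
    fix x assume x: "x \<in> vecs p n"
    have "0 \<le> u x" "u x \<le> 1"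
      using favg_bounds[OF W f01 x] unfolding u_def by auto
    then have "u x * (1 - u x) \<le> min (u x) (1 - u x)"
      by (auto simp: mult_left_le mult_left_le_one_le)
    moreover have "min (u x) (1 - u x) \<le> 1 / 2"
      by (simp add: min_def)
    ultimately show "u x * (1 - u x) \<le> 1 / 2 * indicator S x + eps / 4"
      unfolding S_def indicator_def using x eps by auto
  qed simp
  also have "\<dots> = real (card S) + eps / 2 * N"
    using sum_indicator_subset[of "vecs p n" S] unfolding N_def
    by (simp add: sum.distrib sum_divide_distrib[symmetric] card_vecs S_def)
  finally show ?thesis
    unfolding S_def N_def by simp
qed

text \<open>By supersaturation on the level set of min(u, 1 - u) at eps/4.\<close>

lemma Lambda3_min_favg_gt:
  assumes eps: "eps > 0" and mc: "meshulam_const p c" and k: "k \<ge> 1" "c / real k \<le> eps / 4"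
    and W: "is_subspace p n W" and f01: "\<forall>x\<in>vecs p n. 0 \<le> f x \<and> f x \<le> 1"
    and far: "expect p n (\<lambda>x. \<bar>f x - favg p W f x\<bar>) > eps"
  defines "v \<equiv> \<lambda>x. min (favg p W f x) (1 - favg p W f x)"
  shows "(eps / 4) ^ 4 / real p ^ k < Lambda3 p n v"
proof -
  define S where "S = {x \<in> vecs p n. eps / 4 \<le> v x}"
  have "real (card S) / real p ^ n > eps / 2"
    using card_far_from_boolean_gt[OF W f01 _ far] eps p_gt1 unfolding S_def v_def
    by (simp add: field_simps)
  with k have "eps / 4 < real (card S) / real p ^ n - c / real k"
    by linarith
  then have "(eps / 4) ^ 3 * (eps / 4 / real p ^ k)
      < (eps / 4) ^ 3 * ((real (card S) / real p ^ n - c / real k) / real p ^ k)"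
    using eps p_gt1 by (intro mult_strict_left_mono divide_strict_right_mono) auto
  also have "\<dots> \<le> Lambda3 p n v"
    using Lambda3_ge_level_set[OF mc k(1), of "eps / 4" n v] eps favg_bounds[OF W f01]
    unfolding v_def S_def by simp
  finally show ?thesis
    by (simp add: power_numeral_reduce)
qed

lemma double_Delta_le:
  assumes eps: "0 < eps" "eps \<le> 1 / 2" and c: "c > 0" and k: "real k \<le> 4 * c / eps + 1"
  shows "2 * (eps ^ 6 / (2 ^ 13 * real p ^ 2) * exp (- 16 / eps * c * ln (real p)))
    \<le> (eps / 4) ^ 4 / (64 * real p ^ (k + 1))"
proof -
  have p0: "real p > 0"
    using p_gt1 by simp
  have "exp (- 16 / eps * c * ln (real p)) = real p powr (- 16 / eps * c)"
    using p0 by (simp add: powr_def mult.commute)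
  also have "\<dots> \<le> real p powr (1 - real k)"
  proof (rule powr_mono)
    have "4 * c / eps \<le> 16 * c / eps"
      using eps c by (simp add: divide_right_mono)
    then show "- 16 / eps * c \<le> 1 - real k"
      using k by simp
  qed (use p_gt1 in simp)
  also have "\<dots> = real p / real p ^ k"
    using p0 by (simp add: powr_diff powr_realpow)
  finally have X: "exp (- 16 / eps * c * ln (real p)) \<le> real p / real p ^ k" .
  have "eps ^ 2 \<le> (1 / 2) ^ 2"
    by (rule power_mono) (use eps in auto)
  then have "eps ^ 4 * eps ^ 2 \<le> eps ^ 4 * (1 / 4)"
    by (intro mult_left_mono) (auto simp: power2_eq_square)
  then have "eps ^ 6 \<le> eps ^ 4 / 4"
    by (simp add: power_add[symmetric])
  then have "eps ^ 6 / (4096 * (real p * real p ^ k)) \<le> (eps / 4) ^ 4 / (64 * real p ^ (k + 1))"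
    using p0 by (simp add: field_simps power4_eq_xxxx)
  moreover have "2 * (eps ^ 6 / (2 ^ 13 * real p ^ 2) * exp (- 16 / eps * c * ln (real p)))
      \<le> eps ^ 6 / (4096 * (real p * real p ^ k))"
    using mult_left_mono[OF X, of "2 * (eps ^ 6 / (2 ^ 13 * real p ^ 2))"] eps p0
    by (simp add: power2_eq_square field_simps)
  ultimately show ?thesis
    by linarith
qed

end

context odd_prime_field
begin

lemma abs_balanced_le_1:
  assumes "A \<subseteq> {0..<int p}"
  shows "\<bar>balanced A t\<bar> \<le> 1"
proof -
  have "card A \<le> p"
    using card_mono[OF _ assms] by simp
  then show ?thesis
    unfolding balanced_def ind_Zp_def using p_gt1 by (auto simp: indicator_def field_simps)
qed

text \<open>Move u along a direction of W by min(u, 1 - u) times a balanced function of one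
  coordinate with a very negative progression count.\<close>

lemma exists_perturbation:
  assumes W: "is_subspace p n W" and nontrivial: "W \<noteq> {vzero}"
    and u: "translation_invariant n W u" and u01: "\<forall>x\<in>vecs p n. 0 \<le> u x \<and> u x \<le> 1"
  defines "c \<equiv> \<lambda>x. min (u x) (1 - u x)"
  shows "\<exists>g. (\<forall>x\<in>vecs p n. 0 \<le> g x \<and> g x \<le> 1) \<and> (\<Sum>x\<in>vecs p n. g x) = (\<Sum>x\<in>vecs p n. u x) \<and>
             Lambda3 p n g \<le> Lambda3 p n u - Lambda3 p n c / (64 * real p)"
proof -
  obtain w0 i0 where w0: "w0 \<in> W" "w0 i0 mod int p \<noteq> 0"
    using exists_nonzero_coordinate[OF W nontrivial] by blast
  obtain A where A: "A \<subseteq> {0..<int p}" and LA: "Lambda3_Zp (balanced A) \<le> - 1 / (64 * real p)"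
    using exists_balanced_Lambda3_Zp_le by blast
  interpret perturbation p n W w0 i0 "balanced A"
    by unfold_locales (use W w0 periodic_balanced sum_balanced[OF A] in auto)
  define g where "g = (\<lambda>x. u x + c x * balanced A (x i0))"
  have c: "translation_invariant n W c"
    using u unfolding c_def translation_invariant_def by simp
  have "0 \<le> g x \<and> g x \<le> 1" if x: "x \<in> vecs p n" for x
  proof -
    have c0: "0 \<le> c x" "c x \<le> u x" "c x \<le> 1 - u x"
      using u01 x unfolding c_def by auto
    then have "\<bar>c x * balanced A (x i0)\<bar> \<le> c x"
      using abs_balanced_le_1[OF A] by (simp add: abs_mult mult_left_le)
    then show ?thesis
      using c0 unfolding g_def by (simp add: abs_le_iff)
  qed
  moreover have "(\<Sum>x\<in>vecs p n. g x) = (\<Sum>x\<in>vecs p n. u x)"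
    unfolding g_def by (simp add: sum.distrib sum_modulated[OF c])
  moreover have "Lambda3 p n g \<le> Lambda3 p n u - Lambda3 p n c / (64 * real p)"
  proof -
    have "Lambda3 p n c \<ge> 0"
      using u01 by (intro Lambda3_nonneg) (simp add: c_def)
    then show ?thesis
      unfolding g_def Lambda3_perturbation[OF u c] using mult_right_mono[OF LA] by simp
  qed
  ultimately show ?thesis
    by blast
qed

text \<open>The perturbation of u = f_W lowers Lambda3(u) by Lambda3(min(u, 1 - u))/(64 p),
  which the far-from-boolean bound makes large.\<close>

theorem exists_Lambda3_decrement:
  assumes eps: "eps > 0" and c: "c > 0" and mc: "meshulam_const p c" and k: "4 * c / eps \<le> real k"
    and W: "is_subspace p n W" and f01: "\<forall>x\<in>vecs p n. 0 \<le> f x \<and> f x \<le> 1"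
    and far: "expect p n (\<lambda>x. \<bar>f x - favg p W f x\<bar>) > eps"
  shows "\<exists>g. (\<forall>x\<in>vecs p n. 0 \<le> g x \<and> g x \<le> 1) \<and> expect p n g = expect p n f \<and>
      Lambda3 p n g < Lambda3 p n (favg p W f) - (eps / 4) ^ 4 / (64 * real p ^ (k + 1))"
proof -
  define u where "u = favg p W f"
  have u01: "\<forall>x\<in>vecs p n. 0 \<le> u x \<and> u x \<le> 1"
    unfolding u_def using favg_bounds[OF W f01] by blast
  have "W \<noteq> {vzero}"
    using far favg_vzero[of _ n f] by (auto simp: expect_def eps[THEN less_imp_le, THEN leD])
  then obtain g where g01: "\<forall>x\<in>vecs p n. 0 \<le> g x \<and> g x \<le> 1"
    and sum_g: "(\<Sum>x\<in>vecs p n. g x) = (\<Sum>x\<in>vecs p n. u x)"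
    and Lg: "Lambda3 p n g \<le> Lambda3 p n u - Lambda3 p n (\<lambda>x. min (u x) (1 - u x)) / (64 * real p)"
    using exists_perturbation[OF W _ favg_translation_invariant[OF W] u01[unfolded u_def]]
    unfolding u_def by blast
  have "0 < 4 * c / eps"
    using c eps by simp
  then have k_pos: "0 < 4 * c / eps" "0 < real k"
    using k by linarith+
  then have "c / real k \<le> c / (4 * c / eps)"
    by (intro divide_left_mono[OF k]) (use c mult_pos_pos[OF k_pos(2,1)] in simp_all)
  then have "c / real k \<le> eps / 4"
    using c by simp
  with k_pos have "(eps / 4) ^ 4 / real p ^ k < Lambda3 p n (\<lambda>x. min (u x) (1 - u x))"
    unfolding u_def by (intro Lambda3_min_favg_gt[OF eps mc _ _ W f01 far]) auto
  then have "(eps / 4) ^ 4 / real p ^ k / (64 * real p) < Lambda3 p n (\<lambda>x. min (u x) (1 - u x)) / (64 * real p)"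
    using p_gt1 by (intro divide_strict_right_mono) auto
  then have "Lambda3 p n g < Lambda3 p n u - (eps / 4) ^ 4 / (64 * real p ^ (k + 1))"
    using Lg by (simp add: mult_ac)
  moreover have "expect p n g = expect p n f"
    unfolding expect_def sum_g u_def sum_favg[OF W] ..
  ultimately show ?thesis
    using g01 unfolding u_def by blast
qed

end

theorem theorem3:
  fixes p n :: nat and eps c :: real and f :: "(nat \<Rightarrow> int) \<Rightarrow> real"
  assumes "prime p" and "odd p" and "eps > 0"
    and "c > 0" and "meshulam_const p c"
    and "\<forall>m\<in>vecs p n. 0 \<le> f m \<and> f m \<le> 1"
    and "\<forall>W. is_subspace p n W \<and>
           real (codim p n W) \<le> 1 / (eps ^ 6 / (2 ^ 13 * real p ^ 2) * exp (- 16 / eps * c * ln (real p))) ^ 2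
           \<longrightarrow> expect p n (\<lambda>m. \<bar>f m - favg p W f m\<bar>) > eps"
  shows "\<exists>g :: (nat \<Rightarrow> int) \<Rightarrow> real. (\<forall>m\<in>vecs p n. 0 \<le> g m \<and> g m \<le> 1) \<and>
           expect p n g = expect p n f \<and>
           Lambda3 p n g < Lambda3 p n f - eps ^ 6 / (2 ^ 13 * real p ^ 2) * exp (- 16 / eps * c * ln (real p))"
proof -
  interpret odd_prime_field p
    using assms(1,2) by unfold_locales
  define \<Delta> where "\<Delta> = eps ^ 6 / (2 ^ 13 * real p ^ 2) * exp (- 16 / eps * c * ln (real p))"
  define k where "k = nat \<lceil>4 * c / eps\<rceil>"
  have "\<Delta> > 0"
    unfolding \<Delta>_def using assms(3) p_gt1 by simp
  then obtain W where W: "is_subspace p n W" "real (codim p n W) \<le> 1 / \<Delta>\<^sup>2"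
    and LW: "Lambda3 p n (favg p W f) \<le> Lambda3 p n f + \<Delta>"
    using exists_subspace_Lambda3_favg_le assms(6) by blast
  have far: "expect p n (\<lambda>m. \<bar>f m - favg p W f m\<bar>) > eps"
    using assms(7) W unfolding \<Delta>_def by blast
  have "real k = of_int \<lceil>4 * c / eps\<rceil>"
    unfolding k_def using assms(3,4) by simp
  then have k: "4 * c / eps \<le> real k" "real k \<le> 4 * c / eps + 1"
    by (simp_all add: le_of_int_ceiling of_int_ceiling_le_add_one)
  obtain g where g: "\<forall>m\<in>vecs p n. 0 \<le> g m \<and> g m \<le> 1" "expect p n g = expect p n f"
    and Lg: "Lambda3 p n g < Lambda3 p n (favg p W f) - (eps / 4) ^ 4 / (64 * real p ^ (k + 1))"
    using exists_Lambda3_decrement[OF assms(3-5) k(1) W(1) assms(6) far] by blast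
  have "2 * \<Delta> \<le> (eps / 4) ^ 4 / (64 * real p ^ (k + 1))"
    unfolding \<Delta>_def
    using double_Delta_le assms(3,4) k(2) far expect_abs_diff_favg_le_half[OF W(1) assms(6)] by simp
  then have "Lambda3 p n g < Lambda3 p n f - \<Delta>"
    using Lg LW \<open>\<Delta> > 0\<close> by linarith
  then show ?thesis
    using g unfolding \<Delta>_def by blast
qed

end
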